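(* Let $A\in\mathbb{R}^{n\times n}$ be Metzler and let $E\in\mathbb{R}^{n\times q}$, $C\in\mathbb{R}^{q\times n}$, $F\in\mathbb{R}^{q\times q}$ be entrywise nonnegative. Let $q=q_1+\dots+q_N$ and $$\boldsymbol{\Delta}^{2}:=\{\Delta=\mathrm{diag}(\Delta_1,\ldots,\Delta_N):\ \Delta_i\in\mathbb{C}^{q_i\times q_i},\ \|\Delta_i\|_2\le 1\},\qquad \mathcal{D}_\Delta:=\{\mathrm{diag}(d_1I_{q_1},\ldots,d_NI_{q_N}):\ d_i>0\}.$$ Consider the uncertain system $\dot x=Ax+Ew$, $z=Cx+Fw$, $w=\Delta z$. The following statements are equivalent: (i) The uncertain system is asymptotically stable for all $\Delta\in\boldsymbol{\Delta}^{2}$. (ii) There exist $\lambda,\mu\in\mathbb{R}^n_{>0}$, $\nu\in\mathbb{R}^q_{>0}$ and $D\in\mathcal{D}_\Delta$ such that $A\lambda+E\nu<0$ and $$\begin{bmatrix}\lambda\\ \nu\end{bmatrix}^T\begin{bmatrix}C^TDC & C^TDF\\ F^TDC & F^TDF-D\end{bmatrix}+\mu^T\begin{bmatrix}A & E\end{bmatrix}<0 .$$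
   Context: A real matrix is Metzler if all its off-diagonal entries are nonnegative. $\|\cdot\|_2$ is the matrix norm induced by the Euclidean vector norm. Vector inequalities are componentwise. The uncertain system is asymptotically stable for a given $\Delta$ if $I-F\Delta$ is invertible and $A+E\Delta(I-F\Delta)^{-1}C$ is Hurwitz stable. *)

theory Defs
  imports "HOL-Analysis.Analysis"
begin

definition metzler :: "real^'n^'n \<Rightarrow> bool" where
  "metzler A \<longleftrightarrow> (\<forall>i j. i \<noteq> j \<longrightarrow> 0 \<le> A $ i $ j)"

definition nonneg_mat :: "real^'m^'n \<Rightarrow> bool" where
  "nonneg_mat M \<longleftrightarrow> (\<forall>i j. 0 \<le> M $ i $ j)"

definition pos_vec :: "real^'n \<Rightarrow> bool" where
  "pos_vec v \<longleftrightarrow> (\<forall>i. 0 < v $ i)"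

definition neg_vec :: "real^'n \<Rightarrow> bool" where
  "neg_vec v \<longleftrightarrow> (\<forall>i. v $ i < 0)"

definition cmat :: "real^'m^'n \<Rightarrow> complex^'m^'n" where
  "cmat M = (\<chi> i j. complex_of_real (M $ i $ j))"

definition hurwitz :: "complex^'n^'n \<Rightarrow> bool" where
  "hurwitz M \<longleftrightarrow> (\<forall>l v. v \<noteq> 0 \<and> M *v v = l *s v \<longrightarrow> Re l < 0)"

text \<open>The block structure q = q_1 + ... + q_N is encoded by a map blk
  assigning to each index of the q-dimensional space its block.\<close>
definition Delta2 :: "('q \<Rightarrow> 'b) \<Rightarrow> (complex^'q^'q) set" where
  "Delta2 blk = {\<Delta>. (\<forall>j k. blk j \<noteq> blk k \<longrightarrow> \<Delta> $ j $ k = 0) \<and>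
     (\<forall>b x. (\<forall>j. blk j \<noteq> b \<longrightarrow> x $ j = 0) \<longrightarrow> norm (\<Delta> *v x) \<le> norm x)}"

definition D_Delta :: "('q \<Rightarrow> 'b) \<Rightarrow> (real^'q^'q) set" where
  "D_Delta blk = {D. \<exists>d::'b \<Rightarrow> real. (\<forall>b. 0 < d b) \<and>
      D = (\<chi> i j. if i = j then d (blk i) else 0)}"

definition robustly_stable ::
  "('q \<Rightarrow> 'b) \<Rightarrow> real^'n^'n \<Rightarrow> real^'q^'n \<Rightarrow> real^'n^'q \<Rightarrow> real^'q^'q \<Rightarrow> bool" where
  "robustly_stable blk A E C F \<longleftrightarrow>
     (\<forall>\<Delta> \<in> Delta2 blk.
        invertible (mat 1 - cmat F ** \<Delta>) \<and>
        hurwitz (cmat A + cmat E ** \<Delta> ** matrix_inv (mat 1 - cmat F ** \<Delta>) ** cmat C))"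

end

theory Submission
  imports Defs
begin

(*
  A singular loop matrix mat 1 - F Delta, or an eigenvalue l with Re l >= 0,
  yields a nonzero pair (v, w) with w = Delta (C v + F w) whose moduli x = |v|, y = |w| satisfy
  A x + E y >= 0 (in the eigenvalue case because A is Metzler and l v = A v + E w) and the
  block-energy inequality sum d |y|^2 <= sum d |C x + F y|^2 (every block of Delta is a
  contraction).  Weighted Cauchy-Schwarz turns these quadratic constraints on (x, y) into linear
  constraints on (x^2/lam, y^2/nu), which the two row inequalities of the certificate exclude.

  Taking Delta = 0, A has no eigenvalue with nonnegative real part; Gordan's
  alternative and a Brouwer fixed point argument then make P = -A^-1 entrywise nonnegative,
  so the steady-state gain G = F + C P E is nonnegative.  Block-diagonal rank-one Delta show
  that G loses energy in some block for every nonzero input; separating the convex hull of the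
  concave block-gain map over the simplex from the nonnegative orthant gives block weights d
  with G^T D G - D negative on the nonnegative orthant.  Gordan's alternative yields nu > 0
  with (G^T D G - D) nu < 0, and lam, mu are written down from nu, P and a small perturbation.
*)

definition diag_mat :: "('n \<Rightarrow> 'a::zero) \<Rightarrow> 'a^'n^'n" where
  "diag_mat d = (\<chi> i j. if i = j then d i else 0)"

definition offdiag :: "'a::zero^'n^'n \<Rightarrow> 'a^'n^'n" where
  "offdiag M = (\<chi> i j. if i = j then 0 else M $ i $ j)"

lemma diag_mat_mult_vector: "diag_mat d *v (v::'a::semiring_1^'n) = (\<chi> k. d k * v$k)"
proof -
  have "(\<Sum>j\<in>UNIV. (if i = j then d i else 0) * v$j) = (\<Sum>j\<in>UNIV. if i = j then d i * v$j else 0)" for i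
    by (rule sum.cong) auto
  then show ?thesis
    by (simp add: vec_eq_iff diag_mat_def matrix_vector_mult_def)
qed

lemma transpose_diag_mat [simp]: "transpose (diag_mat d) = diag_mat d"
  by (simp add: vec_eq_iff diag_mat_def transpose_def)

lemma inner_diag_mat: "inner x (diag_mat d *v y) = (\<Sum>k\<in>UNIV. d k * x$k * y$k)"
  by (simp add: diag_mat_mult_vector inner_vec_def algebra_simps)

lemma diag_mat_add_offdiag: "diag_mat (\<lambda>i. M$i$i) + offdiag M = (M::'a::monoid_add^'n^'n)"
  by (simp add: vec_eq_iff diag_mat_def offdiag_def)

lemma matrix_vector_mult_nth_offdiag:
  "(M *v x) $ i = M$i$i * x$i + (offdiag M *v x) $ i"
  for M :: "'a::comm_semiring_1^'n^'n"
proof -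
  have "M *v x = diag_mat (\<lambda>i. M$i$i) *v x + offdiag M *v x"
    by (simp only: diag_mat_add_offdiag flip: matrix_vector_mult_add_rdistrib)
  then show ?thesis
    by (simp add: diag_mat_mult_vector)
qed

lemma matrix_vector_mult_uminus_left: "(- M) *v x = - (M *v x)"
  for M :: "'a::ring_1^'n^'m"
  by (simp add: vec_eq_iff matrix_vector_mult_def sum_negf)

lemma matrix_vector_mult_uminus_right: "M *v (- x) = - (M *v x)"
  for M :: "'a::ring_1^'n^'m"
  by (simp add: vec_eq_iff matrix_vector_mult_def sum_negf)

lemma matrix_mul_uminus_left: "(- M) ** N = - (M ** N)"
  for M :: "'a::ring_1^'n^'m"
  by (simp add: vec_eq_iff matrix_matrix_mult_def sum_negf)

lemma matrix_mul_uminus_right: "M ** (- N) = - (M ** N)"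
  for M :: "'a::ring_1^'n^'m"
  by (simp add: vec_eq_iff matrix_matrix_mult_def sum_negf)

lemma transpose_uminus: "transpose (- M) = - transpose M"
  by (simp add: transpose_def vec_eq_iff)

lemma inner_transpose_mv: "inner x (transpose M *v y) = inner (M *v x) (y::real^_)"
  by (metis dot_lmul_matrix inner_commute transpose_matrix_vector)

lemma vector_matrix_mult_sandwich:
  fixes D :: "real^'q^'q"
  assumes "transpose D = D"
  shows "x v* (transpose M ** D ** N) = transpose N *v (D *v (M *v x))"
  by (simp add: assms matrix_transpose_mul matrix_vector_mul_assoc flip: transpose_matrix_vector)

lemma matrix_inv_mult:
  assumes "invertible (N::'a::semiring_1^'n^'n)"
  shows "N ** matrix_inv N = mat 1" "matrix_inv N ** N = mat 1"
  using someI_ex[OF assms[unfolded invertible_def]] unfolding matrix_inv_def by auto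

lemma invertible_if_ker_trivial:
  fixes N :: "'a::field^'n^'n"
  assumes "\<And>z. N *v z = 0 \<Longrightarrow> z = 0"
  shows "invertible N"
  using assms invertible_left_inverse matrix_left_invertible_ker by blast

lemma power2_norm_vec: "(norm x)\<^sup>2 = (\<Sum>k\<in>UNIV. (norm (x$k))\<^sup>2)"
  by (simp add: norm_vec_def L2_set_def sum_nonneg)

lemma cmat_nth [simp]: "cmat M $ i $ j = complex_of_real (M $ i $ j)"
  by (simp add: cmat_def)

lemma cmat_offdiag: "cmat (offdiag M) = offdiag (cmat M)"
  by (simp add: vec_eq_iff offdiag_def)

definition cvec :: "real^'n \<Rightarrow> complex^'n" where
  "cvec x = (\<chi> i. complex_of_real (x$i))"

lemma cvec_nth [simp]: "cvec x $ i = complex_of_real (x$i)"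
  by (simp add: cvec_def)

lemma cmat_mv_cvec: "cmat M *v cvec x = cvec (M *v x)"
  by (simp add: vec_eq_iff matrix_vector_mult_def)

lemma cvec_add: "cvec x + cvec y = cvec (x + y)"
  by (simp add: vec_eq_iff)

lemma cvec_eq_0_iff [simp]: "cvec x = 0 \<longleftrightarrow> x = 0"
  by (simp add: vec_eq_iff)

definition cmod_vec :: "complex^'n \<Rightarrow> real^'n" where
  "cmod_vec v = (\<chi> i. cmod (v$i))"

lemma cmod_vec_eq_0_iff [simp]: "cmod_vec v = 0 \<longleftrightarrow> v = 0"
  by (simp add: cmod_vec_def vec_eq_iff)

lemma cmod_vec_0 [simp]: "cmod_vec 0 = 0"
  by (simp add: cmod_vec_def vec_eq_iff)

lemma cmod_vec_nonneg: "0 \<le> cmod_vec v $ i"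
  by (simp add: cmod_vec_def)

section \<open>Nonnegative and Metzler matrices\<close>

lemma nonneg_mat_mv_nonneg: "nonneg_mat M \<Longrightarrow> \<forall>i. 0 \<le> x$i \<Longrightarrow> 0 \<le> (M *v x)$j"
  by (auto simp: nonneg_mat_def matrix_vector_mult_def intro!: sum_nonneg)

lemma nonneg_mat_mult: "nonneg_mat M \<Longrightarrow> nonneg_mat N \<Longrightarrow> nonneg_mat (M ** N)"
  by (auto simp: nonneg_mat_def matrix_matrix_mult_def intro!: sum_nonneg)

lemma nonneg_mat_add: "nonneg_mat M \<Longrightarrow> nonneg_mat N \<Longrightarrow> nonneg_mat (M + N)"
  by (simp add: nonneg_mat_def)

lemma nonneg_mat_transpose: "nonneg_mat M \<Longrightarrow> nonneg_mat (transpose M)"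
  by (simp add: nonneg_mat_def transpose_def)

lemma nonneg_mat_offdiag: "metzler M \<Longrightarrow> nonneg_mat (offdiag M)"
  by (simp add: metzler_def nonneg_mat_def offdiag_def)

lemma metzler_transpose: "metzler A \<Longrightarrow> metzler (transpose A)"
  by (simp add: metzler_def transpose_def)

lemma metzler_diag_le_mv:
  assumes "metzler M" and "\<forall>j. 0 \<le> x$j"
  shows "M$i$i * x$i \<le> (M *v x)$i"
  using nonneg_mat_mv_nonneg[OF nonneg_mat_offdiag[OF assms(1)] assms(2), where j=i]
    matrix_vector_mult_nth_offdiag[of M x i] by linarith

lemma neg_vec_inner_nonpos:
  assumes "neg_vec r" "\<forall>i. 0 \<le> u$i"
  shows "inner r u \<le> 0"
  using assms by (auto simp: neg_vec_def inner_vec_def mult_nonpos_nonneg less_imp_le intro!: sum_nonpos)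

lemma neg_vec_inner_neg:
  assumes "neg_vec r" "\<forall>i. 0 \<le> u$i" "u \<noteq> 0"
  shows "inner r u < 0"
proof -
  obtain k where "u$k \<noteq> 0" using assms(3) by (auto simp: vec_eq_iff)
  with assms have "r$k * u$k < 0" by (auto simp: neg_vec_def mult_neg_pos order.not_eq_order_implies_strict)
  moreover have "r$i * u$i \<le> 0" for i
    using assms by (auto simp: neg_vec_def mult_nonpos_nonneg less_imp_le)
  ultimately have "(\<Sum>i\<in>UNIV. r$i * u$i) < 0"
    using sum_strict_mono_ex1[of UNIV "\<lambda>i. r$i * u$i" "\<lambda>_. 0"] by auto
  then show ?thesis
    by (simp add: inner_vec_def)
qed

lemma neg_vec_perturb:
  assumes "neg_vec m"
  shows "\<exists>e>0. neg_vec (m + e *\<^sub>R q)"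
proof -
  have "\<forall>\<^sub>F e in at_right 0. \<forall>k. (m + e *\<^sub>R q)$k < 0"
  proof (rule eventually_all_finite)
    fix k
    have "((\<lambda>e. m$k + e * q$k) \<longlongrightarrow> m$k + 0 * q$k) (at_right 0)"
      by (intro tendsto_intros)
    then have "\<forall>\<^sub>F e in at_right 0. m$k + e * q$k < 0"
      using assms by (intro order_tendstoD(2)) (auto simp: neg_vec_def)
    then show "\<forall>\<^sub>F e in at_right 0. (m + e *\<^sub>R q)$k < 0"
      by simp
  qed
  then obtain b where b: "0 < b" "\<And>e. 0 < e \<Longrightarrow> e < b \<Longrightarrow> \<forall>k. (m + e *\<^sub>R q)$k < 0"
    by (auto simp: eventually_at_right_field)
  from b(2)[of "b/2"] b(1) have "neg_vec (m + (b/2) *\<^sub>R q)"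
    by (simp add: neg_vec_def)
  with b(1) show ?thesis
    by (intro exI[of _ "b/2"]) simp
qed

lemma cmod_cmat_mv_le:
  assumes "nonneg_mat M"
  shows "cmod ((cmat M *v v)$k) \<le> (M *v cmod_vec v)$k"
proof -
  have "cmod ((cmat M *v v)$k) \<le> (\<Sum>j\<in>UNIV. cmod (cmat M $ k $ j * v$j))"
    unfolding matrix_vector_mult_def by (simp only: vec_lambda_beta norm_sum)
  also have "\<dots> = (M *v cmod_vec v)$k"
    using assms by (simp add: matrix_vector_mult_def norm_mult nonneg_mat_def cmod_vec_def)
  finally show ?thesis .
qed

lemma cmod_cmat_mv_add_le:
  assumes "nonneg_mat C" and "nonneg_mat F"
  shows "cmod ((cmat C *v v + cmat F *v w)$k) \<le> (C *v cmod_vec v + F *v cmod_vec w)$k"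
  using norm_triangle_ineq[of "(cmat C *v v)$k" "(cmat F *v w)$k"]
    cmod_cmat_mv_le[OF assms(1), of v k] cmod_cmat_mv_le[OF assms(2), of w k]
  by simp

lemma metzler_eigen_cmod_nonneg:
  fixes A :: "real^'n^'n" and E :: "real^'q^'n"
  assumes "metzler A" and "nonneg_mat E" and "0 \<le> Re l"
    and "l *s v = cmat A *v v + cmat E *v w"
  shows "0 \<le> (A *v cmod_vec v + E *v cmod_vec w)$i"
proof -
  let ?a = "complex_of_real (A$i$i)"
  have "(l - ?a) * v$i = (cmat (offdiag A) *v v + cmat E *v w)$i"
    using arg_cong[OF assms(4), of "\<lambda>x. x$i"] matrix_vector_mult_nth_offdiag[of "cmat A" v i]
    by (simp add: cmat_offdiag algebra_simps)
  then have "cmod (l - ?a) * cmod (v$i) \<le> (offdiag A *v cmod_vec v + E *v cmod_vec w)$i"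
    using cmod_cmat_mv_add_le[OF nonneg_mat_offdiag[OF assms(1)] assms(2), of v w i]
    by (metis norm_mult)
  moreover have "- A$i$i * cmod (v$i) \<le> cmod (l - ?a) * cmod (v$i)"
    using complex_Re_le_cmod[of "l - ?a"] assms(3) by (intro mult_right_mono) auto
  ultimately show ?thesis
    using matrix_vector_mult_nth_offdiag[of A "cmod_vec v" i] by (simp add: cmod_vec_def)
qed

section \<open>Cauchy-Schwarz type inequalities\<close>

lemma square_add_le_mult_add:
  fixes a b r s a' b' :: real
  assumes "a\<^sup>2 \<le> r * a'" "b\<^sup>2 \<le> s * b'" "0 \<le> r" "0 \<le> s" "0 \<le> a'" "0 \<le> b'"
  shows "(a + b)\<^sup>2 \<le> (r + s) * (a' + b')"
proof -
  have "(a*b)\<^sup>2 \<le> (r*b') * (s*a')"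
    using assms mult_mono'[OF assms(1,2)] by (simp add: power_mult_distrib algebra_simps)
  also have "\<dots> \<le> ((r*b' + s*a') / 2)\<^sup>2"
    using sum_squares_ge_zero[of "r*b' - s*a'" 0] by (simp add: power2_eq_square field_simps)
  finally have "\<bar>a*b\<bar> \<le> \<bar>(r*b' + s*a') / 2\<bar>"
    using abs_le_square_iff by blast
  then have "2*a*b \<le> r*b' + s*a'"
    using assms by simp
  then show ?thesis
    using assms by (simp add: power2_sum algebra_simps)
qed

lemma weighted_sum_square_le:
  fixes c l x :: "'a \<Rightarrow> real"
  assumes "\<And>i. i \<in> I \<Longrightarrow> 0 \<le> c i" "\<And>i. i \<in> I \<Longrightarrow> 0 < l i"
  shows "(\<Sum>i\<in>I. c i * x i)\<^sup>2 \<le> (\<Sum>i\<in>I. c i * l i) * (\<Sum>i\<in>I. c i * ((x i)\<^sup>2 / l i))"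
proof -
  have "sqrt (c i * l i) * sqrt (c i / l i) = c i" if "i \<in> I" for i
    using assms[OF that] by (simp add: real_sqrt_mult[symmetric])
  then have "(\<Sum>i\<in>I. c i * x i)\<^sup>2 = (\<Sum>i\<in>I. sqrt (c i * l i) * (sqrt (c i / l i) * x i))\<^sup>2"
    by (simp add: mult.assoc[symmetric] cong: sum.cong)
  also have "\<dots> \<le> (\<Sum>i\<in>I. (sqrt (c i * l i))\<^sup>2) * (\<Sum>i\<in>I. (sqrt (c i / l i) * x i)\<^sup>2)"
    by (rule Cauchy_Schwarz_ineq_sum)
  also have "\<dots> = (\<Sum>i\<in>I. c i * l i) * (\<Sum>i\<in>I. c i * ((x i)\<^sup>2 / l i))"
  proof -
    have "(sqrt (c i * l i))\<^sup>2 = c i * l i" "(sqrt (c i / l i) * x i)\<^sup>2 = c i * ((x i)\<^sup>2 / l i)"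
      if "i \<in> I" for i
      using assms[OF that] by (simp_all add: power_mult_distrib)
    then show ?thesis
      by (simp cong: sum.cong)
  qed
  finally show ?thesis .
qed

lemma sum_sqrt_concave:
  fixes g a b :: "'a \<Rightarrow> real"
  assumes "\<And>l. 0 \<le> g l" and "\<And>l. 0 \<le> a l" and "\<And>l. 0 \<le> b l" and "0 \<le> u" and "u \<le> 1"
  shows "(1 - u) * (\<Sum>l\<in>I. g l * sqrt (a l))\<^sup>2 + u * (\<Sum>l\<in>I. g l * sqrt (b l))\<^sup>2
        \<le> (\<Sum>l\<in>I. g l * sqrt ((1 - u) * a l + u * b l))\<^sup>2"
proof -
  define z where "z l = Complex (sqrt ((1 - u) * a l)) (sqrt (u * b l))" for l
  have "(\<Sum>l\<in>I. complex_of_real (g l) * z l)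
      = Complex (sqrt (1 - u) * (\<Sum>l\<in>I. g l * sqrt (a l))) (sqrt u * (\<Sum>l\<in>I. g l * sqrt (b l)))"
    by (simp add: complex_eq_iff Re_sum Im_sum z_def real_sqrt_mult sum_distrib_left mult_ac)
  then have "(1 - u) * (\<Sum>l\<in>I. g l * sqrt (a l))\<^sup>2 + u * (\<Sum>l\<in>I. g l * sqrt (b l))\<^sup>2
      = (cmod (\<Sum>l\<in>I. complex_of_real (g l) * z l))\<^sup>2"
    using assms(4,5) by (simp add: cmod_power2 power_mult_distrib)
  also have "\<dots> \<le> (\<Sum>l\<in>I. cmod (complex_of_real (g l) * z l))\<^sup>2"
    by (intro power_mono norm_sum) simp
  also have "\<dots> = (\<Sum>l\<in>I. g l * sqrt ((1 - u) * a l + u * b l))\<^sup>2"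
    using assms by (simp add: norm_mult z_def complex_norm)
  finally show ?thesis .
qed

section \<open>Separation and the theorem of the alternative\<close>

definition unit_simplex :: "(real^'n) set" where
  "unit_simplex = {x. (\<forall>i. 0 \<le> x$i) \<and> (\<Sum>i\<in>UNIV. x$i) = 1}"

lemma unit_simplex_eq:
  "unit_simplex = (\<Inter>i. {x. 0 \<le> inner (axis i 1) x}) \<inter> {x. inner (vec 1) x = 1}"
  by (auto simp: unit_simplex_def inner_axis' inner_vec_def[of "1::real^'n"])

lemma convex_unit_simplex: "convex unit_simplex"
  unfolding unit_simplex_eq
  by (intro convex_Int convex_INT ballI convex_halfspace_ge convex_hyperplane)

lemma compact_unit_simplex: "compact unit_simplex"
proof -
  have "closed unit_simplex"
    unfolding unit_simplex_eq by (intro closed_Int closed_INT ballI closed_halfspace_ge closed_hyperplane)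
  moreover have "norm x \<le> 1" if "x \<in> unit_simplex" for x
    using that norm_le_l1_cart[of x] by (simp add: unit_simplex_def)
  ultimately show ?thesis
    by (auto simp: compact_eq_bounded_closed bounded_iff)
qed

lemma unit_simplex_nonempty: "unit_simplex \<noteq> {}"
proof -
  have "axis undefined 1 \<in> (unit_simplex :: (real^'n) set)"
    by (simp add: unit_simplex_def axis_def)
  then show ?thesis by blast
qed

lemma scaleR_inverse_sum_unit_simplex:
  assumes "\<forall>i. 0 \<le> x$i" and "x \<noteq> 0"
  shows "inverse (\<Sum>i\<in>UNIV. x$i) *\<^sub>R x \<in> unit_simplex"
proof -
  obtain k where "x$k \<noteq> 0" using assms(2) by (auto simp: vec_eq_iff)
  with assms(1) have "0 < x$k" by (simp add: order_le_neq_trans)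
  also have "x$k \<le> (\<Sum>i\<in>UNIV. x$i)" by (rule member_le_sum) (use assms(1) in auto)
  finally show ?thesis
    using assms(1) by (simp add: unit_simplex_def sum_distrib_left[symmetric])
qed

lemma nonpos_if_scaled_le:
  fixes c b :: real
  assumes "\<And>t. 0 < t \<Longrightarrow> t * c \<le> b"
  shows "c \<le> 0"
proof (rule ccontr)
  assume "\<not> c \<le> 0"
  then have "0 < (\<bar>b\<bar> + 1) / c" and "(\<bar>b\<bar> + 1) / c * c = \<bar>b\<bar> + 1" by simp_all
  with assms[of "(\<bar>b\<bar> + 1) / c"] show False by linarith
qed

lemma nonneg_if_inner_pos_vec_nonneg:
  fixes w :: "real^'n"
  assumes "\<And>x. pos_vec x \<Longrightarrow> 0 \<le> inner w x"
  shows "0 \<le> w$j"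
proof -
  have "((\<lambda>e. w$j + e * (\<Sum>i\<in>UNIV. w$i)) \<longlongrightarrow> w$j + 0 * (\<Sum>i\<in>UNIV. w$i)) (at_right 0)"
    by (intro tendsto_intros)
  moreover have "0 \<le> w$j + e * (\<Sum>i\<in>UNIV. w$i)" if "0 < e" for e
  proof -
    have "pos_vec (axis j 1 + vec e)"
      using that by (simp add: pos_vec_def axis_def)
    with assms have "0 \<le> inner w (axis j 1 + vec e)" by blast
    also have "\<dots> = w$j + e * (\<Sum>i\<in>UNIV. w$i)"
      by (simp add: inner_add_right inner_axis inner_vec_def[of w "vec e"] sum_distrib_left mult.commute)
    finally show ?thesis .
  qed
  then have "\<forall>\<^sub>F e in at_right 0. 0 \<le> w$j + e * (\<Sum>i\<in>UNIV. w$i)"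
    by (auto simp: eventually_at_right_field intro: exI[of _ 1])
  ultimately show ?thesis
    using tendsto_lowerbound by fastforce
qed

lemma gordan_alternative:
  fixes M :: "real^'n^'m"
  assumes "\<nexists>x. pos_vec x \<and> neg_vec (M *v x)"
  shows "\<exists>y. (\<forall>i. 0 \<le> y$i) \<and> y \<noteq> 0 \<and> (\<forall>j. 0 \<le> (y v* M)$j)"
proof -
  define S where "S = {y::real^'m. neg_vec y}"
  define T where "T = (*v) M ` {x. pos_vec x}"
  have "S = (\<Inter>i. {y. inner (axis i 1) y < 0})"
    by (auto simp: S_def neg_vec_def inner_axis')
  then have "convex S" by (simp add: convex_INT convex_halfspace_lt)
  have "{x::real^'n. pos_vec x} = (\<Inter>i. {x. inner (axis i 1) x > 0})"
    by (auto simp: pos_vec_def inner_axis')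
  then have "convex T"
    unfolding T_def by (intro convex_linear_image) (simp_all add: convex_INT convex_halfspace_gt)
  have "vec (-1) \<in> S" "M *v vec 1 \<in> T"
    by (auto simp: S_def T_def neg_vec_def pos_vec_def)
  moreover have "S \<inter> T = {}"
    using assms by (auto simp: S_def T_def)
  ultimately obtain a b where "a \<noteq> 0" and aS: "\<forall>s\<in>S. inner a s \<le> b" and aT: "\<forall>t\<in>T. b \<le> inner a t"
    using separating_hyperplane_sets[OF \<open>convex S\<close> \<open>convex T\<close>] by blast
  have "0 \<le> inner a x" if "pos_vec x" for x
  proof -
    have "t * inner a (- x) \<le> b" if "0 < t" for t
    proof -
      have "- (t *\<^sub>R x) \<in> S"
        using \<open>pos_vec x\<close> \<open>0 < t\<close> by (simp add: S_def neg_vec_def pos_vec_def)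
      with aS show ?thesis by fastforce
    qed
    then have "inner a (- x) \<le> 0" by (rule nonpos_if_scaled_le)
    then show ?thesis by simp
  qed
  moreover have "0 \<le> inner (a v* M) x" if "pos_vec x" for x
  proof -
    have "t * inner (a v* M) (- x) \<le> - b" if "0 < t" for t
    proof -
      have "M *v (t *\<^sub>R x) \<in> T"
        using \<open>pos_vec x\<close> \<open>0 < t\<close> by (auto simp: T_def pos_vec_def)
      with aT show ?thesis
        by (fastforce simp: dot_lmul_matrix matrix_vector_mult_scaleR)
    qed
    then have "inner (a v* M) (- x) \<le> 0" by (rule nonpos_if_scaled_le)
    then show ?thesis by simp
  qed
  ultimately show ?thesis
    using \<open>a \<noteq> 0\<close> by (blast intro: nonneg_if_inner_pos_vec_nonneg)
qed

lemma separate_from_nonneg_orthant: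
  fixes K :: "(real^'q) set"
  assumes "compact K" and "convex K" and "\<forall>x\<in>K. \<exists>k. x$k < 0"
  shows "\<exists>a b. (\<forall>k. 0 \<le> a$k) \<and> b < 0 \<and> (\<forall>x\<in>K. inner a x < b)"
proof (cases "K = {}")
  case True
  then show ?thesis by (intro exI[of _ 0] exI[of _ "-1"]) auto
next
  case False
  define P where "P = {y::real^'q. \<forall>k. 0 \<le> y$k}"
  have "P = (\<Inter>k. {y. 0 \<le> inner (axis k 1) y})"
    by (auto simp: P_def inner_axis')
  then have "closed P" "convex P"
    by (simp_all add: closed_INT closed_halfspace_ge convex_INT convex_halfspace_ge)
  moreover have "K \<inter> P = {}"
    using assms(3) by (force simp: P_def not_le[symmetric])
  ultimately obtain a b where aK: "\<forall>x\<in>K. inner a x < b" and aP: "\<forall>y\<in>P. b < inner a y"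
    using separating_hyperplane_compact_closed[OF assms(2,1) False] by metis
  have "b < 0"
    using aP[rule_format, of 0] by (simp add: P_def)
  have "0 \<le> a$k" for k
  proof (rule ccontr)
    assume "\<not> 0 \<le> a$k"
    then have "(b / a$k) *\<^sub>R axis k 1 \<in> P"
      using \<open>b < 0\<close> by (auto simp: P_def axis_def zero_le_divide_iff)
    with aP \<open>\<not> 0 \<le> a$k\<close> show False
      by (fastforce simp: inner_axis)
  qed
  with \<open>b < 0\<close> aK show ?thesis by blast
qed

section \<open>Inverse-negative Metzler matrices\<close>

lemma nonneg_mat_metzler_shift:
  assumes "metzler A" and "\<And>i. - A$i$i \<le> c"
  shows "nonneg_mat (A + diag_mat (\<lambda>_. c))"
  unfolding nonneg_mat_def
proof (intro allI)
  fix i j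
  show "0 \<le> (A + diag_mat (\<lambda>_. c)) $ i $ j"
    using assms(1) assms(2)[of i] by (cases "i = j") (auto simp: metzler_def diag_mat_def)
qed

lemma compact_convex_simplex_mv_nonneg:
  fixes A :: "real^'n^'n"
  shows "compact (unit_simplex \<inter> {x. \<forall>i. 0 \<le> (A *v x)$i})"
    and "convex (unit_simplex \<inter> {x. \<forall>i. 0 \<le> (A *v x)$i})"
proof -
  have "{x. \<forall>i. 0 \<le> (A *v x)$i} = (\<Inter>i. {x. 0 \<le> inner (A$i) x})"
    by (auto simp: matrix_vector_mul_component)
  then have "closed {x. \<forall>i. 0 \<le> (A *v x)$i}" "convex {x. \<forall>i. 0 \<le> (A *v x)$i}"
    by (simp_all add: closed_INT closed_halfspace_ge convex_INT convex_halfspace_ge)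
  then show "compact (unit_simplex \<inter> {x. \<forall>i. 0 \<le> (A *v x)$i})"
    and "convex (unit_simplex \<inter> {x. \<forall>i. 0 \<le> (A *v x)$i})"
    by (simp_all add: compact_Int_closed compact_unit_simplex convex_Int convex_unit_simplex)
qed

lemma simplex_mv_nonneg_nonempty:
  fixes A :: "real^'n^'n"
  assumes "\<forall>i. 0 \<le> y$i" and "y \<noteq> 0" and "\<forall>i. 0 \<le> (A *v y)$i"
  shows "unit_simplex \<inter> {x. \<forall>i. 0 \<le> (A *v x)$i} \<noteq> {}"
proof -
  define s where "s = (\<Sum>i\<in>UNIV. y$i)"
  have "0 \<le> inverse s" using assms(1) by (simp add: s_def sum_nonneg)
  then have "\<forall>i. 0 \<le> (A *v (inverse s *\<^sub>R y))$i"
    using assms(3) by (simp only: matrix_vector_mult_scaleR vector_scaleR_component) simp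
  then show ?thesis
    using scaleR_inverse_sum_unit_simplex[OF assms(1,2)] by (auto simp: s_def)
qed

lemma brouwer_normalised_eigenvector:
  fixes B :: "real^'n^'n"
  assumes "compact K" and "convex K" and "K \<noteq> {}"
    and pos: "\<And>x. x \<in> K \<Longrightarrow> 0 < (\<Sum>i\<in>UNIV. (B *v x)$i)"
    and into: "\<And>x. x \<in> K \<Longrightarrow> inverse (\<Sum>i\<in>UNIV. (B *v x)$i) *\<^sub>R (B *v x) \<in> K"
  shows "\<exists>x\<in>K. B *v x = (\<Sum>i\<in>UNIV. (B *v x)$i) *\<^sub>R x"
proof -
  define f where "f x = inverse (\<Sum>i\<in>UNIV. (B *v x)$i) *\<^sub>R (B *v x)" for x
  have "continuous_on K f"
    unfolding f_def
    by (intro continuous_intros)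
       (auto intro: linear_continuous_on matrix_vector_mul_bounded_linear dest!: pos)
  moreover have "f \<in> K \<rightarrow> K"
    using into by (simp add: f_def)
  ultimately obtain x where "x \<in> K" "f x = x"
    using brouwer[OF assms(1-3)] by blast
  define s where "s = (\<Sum>i\<in>UNIV. (B *v x)$i)"
  have "0 < s"
    using pos[OF \<open>x \<in> K\<close>] by (simp add: s_def)
  then have "B *v x = s *\<^sub>R f x"
    by (simp add: f_def s_def)
  with \<open>f x = x\<close> \<open>x \<in> K\<close> show ?thesis
    by (auto simp: s_def)
qed

lemma metzler_nonneg_eigenvector:
  fixes A :: "real^'n^'n"
  assumes "metzler A" and y: "\<forall>i. 0 \<le> y$i" "y \<noteq> 0" "\<forall>i. 0 \<le> (A *v y)$i"
  shows "\<exists>x r. x \<noteq> 0 \<and> 0 \<le> r \<and> A *v x = r *\<^sub>R x"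
proof -
  \<comment> \<open>the nonnegative shift B = A + c I commutes with A, so x |-> B x / sum (B x) maps the part
    of the simplex where A x \<ge> 0 into itself\<close>
  define c where "c = 1 + (\<Sum>i\<in>UNIV. \<bar>A$i$i\<bar>)"
  define B where "B = A + diag_mat (\<lambda>_. c)"
  define K where "K = unit_simplex \<inter> {x. \<forall>i. 0 \<le> (A *v x)$i}"
  have Bv: "B *v x = A *v x + c *\<^sub>R x" for x
    by (simp add: B_def matrix_vector_mult_add_rdistrib diag_mat_mult_vector vec_eq_iff)
  have "nonneg_mat B"
    unfolding B_def
  proof (rule nonneg_mat_metzler_shift[OF assms(1)])
    fix i
    have "\<bar>A$i$i\<bar> \<le> (\<Sum>i\<in>UNIV. \<bar>A$i$i\<bar>)"
      by (rule member_le_sum) auto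
    then show "- A$i$i \<le> c"
      unfolding c_def by linarith
  qed
  have sum_B: "c \<le> (\<Sum>i\<in>UNIV. (B *v x)$i)" if "x \<in> K" for x
  proof -
    have "(\<Sum>i\<in>UNIV. (B *v x)$i) = (\<Sum>i\<in>UNIV. (A *v x)$i) + c"
      using that by (simp add: Bv sum.distrib sum_distrib_left[symmetric] K_def unit_simplex_def)
    then show ?thesis
      using that by (auto simp: K_def intro!: sum_nonneg)
  qed
  have "1 \<le> c" by (simp add: c_def sum_nonneg)
  have "K \<noteq> {}"
    unfolding K_def by (rule simplex_mv_nonneg_nonempty[OF y])
  moreover have "inverse (\<Sum>i\<in>UNIV. (B *v x)$i) *\<^sub>R (B *v x) \<in> K" if "x \<in> K" for x
  proof -
    have "0 < (\<Sum>i\<in>UNIV. (B *v x)$i)" using sum_B[OF that] \<open>1 \<le> c\<close> by simp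
    moreover have "0 \<le> (B *v x)$i" "0 \<le> (B *v (A *v x))$i" for i
      using that by (auto simp: K_def unit_simplex_def intro!: nonneg_mat_mv_nonneg[OF \<open>nonneg_mat B\<close>])
    moreover have "A *v (B *v x) = B *v (A *v x)"
      by (simp add: Bv matrix_vector_right_distrib matrix_vector_mult_scaleR)
    ultimately show ?thesis
      by (simp add: K_def unit_simplex_def sum_distrib_left[symmetric] matrix_vector_mult_scaleR)
  qed
  moreover have "compact K" "convex K"
    unfolding K_def by (rule compact_convex_simplex_mv_nonneg)+
  moreover have "0 < (\<Sum>i\<in>UNIV. (B *v x)$i)" if "x \<in> K" for x
    using sum_B[OF that] \<open>1 \<le> c\<close> by linarith
  ultimately obtain x where "x \<in> K" and x: "B *v x = (\<Sum>i\<in>UNIV. (B *v x)$i) *\<^sub>R x"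
    using brouwer_normalised_eigenvector[of K B] by blast
  define \<sigma> where "\<sigma> = (\<Sum>i\<in>UNIV. (B *v x)$i)"
  have "B *v x = \<sigma> *\<^sub>R x"
    using x unfolding \<sigma>_def .
  then have "A *v x = (\<sigma> - c) *\<^sub>R x"
    by (simp add: Bv algebra_simps)
  moreover have "x \<noteq> 0"
    using \<open>x \<in> K\<close> by (auto simp: K_def unit_simplex_def)
  ultimately show ?thesis
    using sum_B[OF \<open>x \<in> K\<close>] by (force simp: \<sigma>_def)
qed

lemma metzler_pos_vec_if_neg_vec:
  fixes B :: "real^'n^'n"
  assumes "metzler B" and "\<forall>i. 0 \<le> z$i" and "neg_vec (B *v z)"
  shows "pos_vec z"
  unfolding pos_vec_def
proof
  fix i
  show "0 < z$i"
  proof (rule ccontr)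
    assume "\<not> 0 < z$i"
    then have "z$i = 0" using assms(2)[rule_format, of i] by linarith
    then have "0 \<le> (B *v z)$i" using metzler_diag_le_mv[OF assms(1,2), of i] by simp
    then show False using assms(3) by (simp add: neg_vec_def not_le[symmetric])
  qed
qed

lemma metzler_nonneg_if_mv_nonpos:
  fixes B :: "real^'n^'n"
  assumes "metzler B" and "pos_vec m" and "neg_vec (B *v m)" and "\<forall>i. (B *v x)$i \<le> 0"
  shows "0 \<le> x$k"
proof (rule ccontr)
  assume "\<not> 0 \<le> x$k"
  have m: "0 < m$i" for i using assms(2) by (simp add: pos_vec_def)
  \<comment> \<open>t is the largest scalar with x - t m nonnegative; then x - t m vanishes at i0,
    where the Metzler row i0 contradicts B x \<le> 0 and B m < 0\<close>
  define t where "t = Min (range (\<lambda>i. x$i / m$i))"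
  have "t \<in> range (\<lambda>i. x$i / m$i)"
    unfolding t_def by (rule Min_in) auto
  then obtain i0 where i0: "t = x$i0 / m$i0" by blast
  have t_le: "t \<le> x$i / m$i" for i
    unfolding t_def by (rule Min_le) auto
  have "t < 0"
    using t_le[of k] m[of k] \<open>\<not> 0 \<le> x$k\<close> by (smt (verit) divide_neg_pos)
  define x' where "x' = x - t *\<^sub>R m"
  have "0 \<le> x'$i" for i
    using t_le[of i] m[of i] by (simp add: x'_def le_divide_eq)
  moreover have "x'$i0 = 0"
    using m[of i0] by (simp add: x'_def i0)
  ultimately have "0 \<le> (B *v x')$i0"
    using metzler_diag_le_mv[OF assms(1), of x' i0] by simp
  moreover have "(B *v x')$i0 = (B *v x)$i0 - t * (B *v m)$i0"
    by (simp add: x'_def matrix_vector_mult_diff_distrib matrix_vector_mult_scaleR)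
  moreover have "0 < t * (B *v m)$i0"
    using \<open>t < 0\<close> assms(3) by (simp add: neg_vec_def mult_neg_neg)
  ultimately show False
    using assms(4) by (smt (verit))
qed

lemma metzler_neg_inverse_nonneg:
  fixes A :: "real^'n^'n"
  assumes "metzler A" and "pos_vec m" and "neg_vec (transpose A *v m)"
  shows "\<exists>P. nonneg_mat P \<and> A ** P = - mat 1 \<and> P ** A = - mat 1"
proof -
  let ?B = "transpose A"
  note nonneg = metzler_nonneg_if_mv_nonpos[OF metzler_transpose[OF assms(1)] assms(2,3)]
  have "invertible ?B"
  proof (rule invertible_if_ker_trivial)
    fix z assume "?B *v z = 0"
    then have "0 \<le> z$k" "0 \<le> (- z)$k" for k
      by (intro nonneg, simp add: matrix_vector_mult_uminus_right)+
    then show "z = 0" by (auto simp: vec_eq_iff intro: order.antisym)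
  qed
  define Q where "Q = matrix_inv ?B"
  have BQ: "?B ** Q = mat 1" and QB: "Q ** ?B = mat 1"
    using matrix_inv_mult[OF \<open>invertible ?B\<close>] by (auto simp: Q_def)
  have "Q$i$j \<le> 0" for i j
  proof -
    have "?B *v (- (Q *v axis j 1)) = - axis j 1"
      by (simp add: matrix_vector_mult_uminus_right matrix_vector_mul_assoc BQ)
    then have "0 \<le> (- (Q *v axis j 1))$i"
      by (intro nonneg) (auto simp: axis_def)
    moreover have "(Q *v axis j 1)$i = Q$i$j"
      by (simp add: matrix_vector_mult_def axis_def if_distrib cong: if_cong)
    ultimately show ?thesis by simp
  qed
  then have "nonneg_mat (- transpose Q)"
    by (simp add: nonneg_mat_def transpose_def)
  moreover have "A ** (- transpose Q) = - mat 1" "(- transpose Q) ** A = - mat 1"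
    using arg_cong[OF QB, of transpose] arg_cong[OF BQ, of transpose]
    by (simp_all add: matrix_transpose_mul matrix_mul_uminus_left matrix_mul_uminus_right)
  ultimately show ?thesis by blast
qed

lemma metzler_neg_inverse_nonneg_if_no_nonneg_eigenvalue:
  fixes A :: "real^'n^'n"
  assumes "metzler A" and no_eig: "\<And>x r. x \<noteq> 0 \<Longrightarrow> 0 \<le> r \<Longrightarrow> A *v x \<noteq> r *\<^sub>R x"
  shows "\<exists>P. nonneg_mat P \<and> A ** P = - mat 1 \<and> P ** A = - mat 1"
proof -
  have "\<exists>m. pos_vec m \<and> neg_vec (transpose A *v m)"
  proof (rule ccontr)
    assume "\<not> ?thesis"
    from gordan_alternative[OF this] obtain y
      where "\<forall>i. 0 \<le> y$i" "y \<noteq> 0" "\<forall>j. 0 \<le> (A *v y)$j" by auto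
    from metzler_nonneg_eigenvector[OF assms(1) this] no_eig show False by blast
  qed
  then show ?thesis using metzler_neg_inverse_nonneg[OF assms(1)] by blast
qed

section \<open>Block-diagonal uncertainties\<close>

definition block_sum :: "('q::finite \<Rightarrow> 'b) \<Rightarrow> ('q \<Rightarrow> real) \<Rightarrow> 'b \<Rightarrow> real" where
  "block_sum blk f b = (\<Sum>j\<in>UNIV. if blk j = b then f j else 0)"

lemma block_sum_eq_sum: "block_sum blk f b = sum f {j. blk j = b}"
  unfolding block_sum_def by (simp add: sum.If_cases)

lemma block_sum_nonneg: "(\<And>j. 0 \<le> f j) \<Longrightarrow> 0 \<le> block_sum blk f b"
  by (auto simp: block_sum_def intro!: sum_nonneg)

lemma block_sum_member_le: "(\<And>j. 0 \<le> f j) \<Longrightarrow> f k \<le> block_sum blk f (blk k)"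
  unfolding block_sum_def by (rule order.trans[OF _ member_le_sum[of k]]) auto

lemma block_sum_outside_range: "b \<notin> range blk \<Longrightarrow> block_sum blk f b = 0"
  unfolding block_sum_def by (rule sum.neutral) auto

lemma block_sum_diff: "block_sum blk (\<lambda>j. f j - g j) b = block_sum blk f b - block_sum blk g b"
  unfolding block_sum_def by (simp add: sum_subtractf[symmetric] if_distrib cong: if_cong)

lemma sum_blockwise:
  "(\<Sum>k\<in>UNIV. g (blk k) * f k) = (\<Sum>b\<in>range blk. g b * block_sum blk f b)"
proof -
  have "(\<Sum>b\<in>range blk. g b * block_sum blk f b)
      = (\<Sum>k\<in>UNIV. \<Sum>b\<in>range blk. if b = blk k then g b * f k else 0)"
    unfolding block_sum_def sum_distrib_left
    by (subst sum.swap) (auto intro!: sum.cong)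
  also have "\<dots> = (\<Sum>k\<in>UNIV. g (blk k) * f k)"
    by (simp add: sum.delta')
  finally show ?thesis ..
qed

lemma D_Delta_iff: "D \<in> D_Delta blk \<longleftrightarrow> (\<exists>d. (\<forall>b. 0 < d b) \<and> D = diag_mat (\<lambda>i. d (blk i)))"
  by (simp add: D_Delta_def diag_mat_def)

lemma Delta2_block_energy_le:
  fixes z :: "complex^'q" and blk :: "'q \<Rightarrow> 'b"
  assumes "\<Delta> \<in> Delta2 blk"
  shows "block_sum blk (\<lambda>k. (cmod ((\<Delta> *v z)$k))\<^sup>2) b \<le> block_sum blk (\<lambda>k. (cmod (z$k))\<^sup>2) b"
proof -
  define restrict where "restrict u = (\<chi> k. if blk k = b then u$k else 0)" for u :: "complex^'q"
  have norm_restrict: "(norm (restrict u))\<^sup>2 = block_sum blk (\<lambda>k. (cmod (u$k))\<^sup>2) b" for u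
    unfolding power2_norm_vec block_sum_def restrict_def by (intro sum.cong) auto
  have "(\<Delta> *v restrict z)$j = restrict (\<Delta> *v z) $ j" for j
    using assms by (cases "blk j = b") (auto simp: Delta2_def restrict_def matrix_vector_mult_def intro!: sum.cong sum.neutral)
  then have "\<Delta> *v restrict z = restrict (\<Delta> *v z)"
    by (simp add: vec_eq_iff)
  moreover have "\<forall>j. blk j \<noteq> b \<longrightarrow> restrict z $ j = 0"
    by (simp add: restrict_def)
  then have "norm (\<Delta> *v restrict z) \<le> norm (restrict z)"
    using assms unfolding Delta2_def by blast
  ultimately show ?thesis
    by (metis norm_restrict norm_ge_zero power_mono)
qed

lemma Delta2_weighted_energy_le:
  fixes z :: "complex^'q" and blk :: "'q \<Rightarrow> 'b"
  assumes "\<Delta> \<in> Delta2 blk" and "\<And>b. 0 \<le> d b"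
  shows "(\<Sum>k\<in>UNIV. d (blk k) * (cmod ((\<Delta> *v z)$k))\<^sup>2) \<le> (\<Sum>k\<in>UNIV. d (blk k) * (cmod (z$k))\<^sup>2)"
  unfolding sum_blockwise[of d blk]
  by (intro sum_mono mult_left_mono Delta2_block_energy_le assms)

definition block_rank_one :: "('q::finite \<Rightarrow> 'b) \<Rightarrow> real^'q \<Rightarrow> real^'q \<Rightarrow> real^'q^'q" where
  "block_rank_one blk y g =
     (\<chi> j k. if blk j = blk k then y$j * g$k / block_sum blk (\<lambda>i. (g$i)\<^sup>2) (blk k) else 0)"

lemma cmod_sum_block_le:
  fixes g :: "real^'q" and x :: "complex^'q" and blk :: "'q \<Rightarrow> 'b"
  assumes "\<forall>j. blk j \<noteq> b \<longrightarrow> x$j = 0"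
  shows "(cmod (\<Sum>k\<in>UNIV. complex_of_real (g$k) * x$k))\<^sup>2 \<le> block_sum blk (\<lambda>k. (g$k)\<^sup>2) b * (norm x)\<^sup>2"
proof -
  define a where "a = (\<chi> k. if blk k = b then \<bar>g$k\<bar> else 0)"
  have "cmod (\<Sum>k\<in>UNIV. complex_of_real (g$k) * x$k) \<le> (\<Sum>k\<in>UNIV. cmod (complex_of_real (g$k) * x$k))"
    by (rule norm_sum)
  also have "\<dots> = inner a (cmod_vec x)"
    unfolding inner_vec_def a_def cmod_vec_def using assms by (intro sum.cong) (auto simp: norm_mult)
  also have "\<dots> \<le> norm a * norm (cmod_vec x)"
    by (rule norm_cauchy_schwarz)
  also have "\<dots> = norm a * norm x"
    by (simp add: cmod_vec_def norm_vec_def)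
  finally have "cmod (\<Sum>k\<in>UNIV. complex_of_real (g$k) * x$k) \<le> norm a * norm x" .
  moreover have "(norm a)\<^sup>2 = block_sum blk (\<lambda>k. (g$k)\<^sup>2) b"
    unfolding block_sum_def power2_norm_vec a_def by (intro sum.cong) auto
  ultimately show ?thesis
    by (metis norm_ge_zero power_mono power_mult_distrib)
qed

lemma block_rank_one_in_Delta2:
  fixes y g :: "real^'q" and blk :: "'q \<Rightarrow> 'b"
  assumes le: "\<And>b. block_sum blk (\<lambda>j. (y$j)\<^sup>2) b \<le> block_sum blk (\<lambda>j. (g$j)\<^sup>2) b"
  shows "cmat (block_rank_one blk y g) \<in> Delta2 blk"
  unfolding Delta2_def
proof (intro CollectI conjI allI impI)
  fix j k assume "blk j \<noteq> blk k"
  then show "cmat (block_rank_one blk y g) $ j $ k = 0" by (simp add: block_rank_one_def)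
next
  fix b and x :: "complex^'q" assume supp: "\<forall>j. blk j \<noteq> b \<longrightarrow> x $ j = 0"
  define nb where "nb = block_sum blk (\<lambda>i. (g$i)\<^sup>2) b"
  define S where "S = (\<Sum>k\<in>UNIV. complex_of_real (g$k) * x$k)"
  have Rx: "(cmat (block_rank_one blk y g) *v x)$j
      = (if blk j = b then complex_of_real (y$j / nb) * S else 0)" for j
    using supp
    by (cases "blk j = b")
       (auto simp: matrix_vector_mult_def block_rank_one_def nb_def S_def sum_distrib_left
             intro!: sum.cong sum.neutral)
  have "(norm (cmat (block_rank_one blk y g) *v x))\<^sup>2
      = block_sum blk (\<lambda>j. (y$j)\<^sup>2) b * (cmod S)\<^sup>2 / nb\<^sup>2"
    unfolding power2_norm_vec Rx block_sum_def sum_divide_distrib sum_distrib_right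
    by (intro sum.cong) (auto simp: norm_mult norm_divide power_mult_distrib power_divide)
  also have "\<dots> \<le> nb * (nb * (norm x)\<^sup>2) / nb\<^sup>2"
    using le[of b] cmod_sum_block_le[OF supp, of g]
    by (intro divide_right_mono mult_mono) (auto simp: nb_def S_def block_sum_nonneg)
  also have "\<dots> \<le> (norm x)\<^sup>2"
    by (cases "nb = 0") (auto simp: power2_eq_square)
  finally show "norm (cmat (block_rank_one blk y g) *v x) \<le> norm x"
    by (simp add: power2_le_iff_abs_le)
qed

lemma block_rank_one_mult_vector:
  fixes y g :: "real^'q" and blk :: "'q \<Rightarrow> 'b"
  assumes le: "\<And>b. block_sum blk (\<lambda>j. (y$j)\<^sup>2) b \<le> block_sum blk (\<lambda>j. (g$j)\<^sup>2) b"
  shows "block_rank_one blk y g *v g = y"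
proof -
  define nb where "nb = block_sum blk (\<lambda>i. (g$i)\<^sup>2)"
  have "(block_rank_one blk y g *v g)$j = y$j * nb (blk j) / nb (blk j)" for j
    unfolding matrix_vector_mult_def block_rank_one_def nb_def block_sum_def
      sum_distrib_left sum_divide_distrib
    by (auto simp: power2_eq_square intro!: sum.cong)
  moreover have "y$j = 0" if "nb (blk j) = 0" for j
  proof -
    have "(y$j)\<^sup>2 \<le> block_sum blk (\<lambda>j. (y$j)\<^sup>2) (blk j)"
      by (rule block_sum_member_le) simp
    with le[of "blk j"] that have "(y$j)\<^sup>2 \<le> 0"
      unfolding nb_def by linarith
    then show ?thesis by simp
  qed
  ultimately show ?thesis
    by (auto simp: vec_eq_iff)
qed

section \<open>Sufficiency of the certificate\<close>

definition square_over :: "real^'n \<Rightarrow> real^'n \<Rightarrow> real^'n" where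
  "square_over x l = (\<chi> i. (x$i)\<^sup>2 / l$i)"

lemma square_over_eq_0_iff:
  assumes "pos_vec l"
  shows "square_over x l = 0 \<longleftrightarrow> x = 0"
  using assms by (auto simp: square_over_def vec_eq_iff pos_vec_def less_imp_neq[symmetric])

lemma square_over_nonneg:
  assumes "pos_vec l"
  shows "0 \<le> square_over x l $ i"
  using assms by (simp add: square_over_def pos_vec_def less_imp_le)

lemma nonneg_mat_mv_square_le:
  assumes "nonneg_mat M" and "pos_vec l"
  shows "((M *v x)$k)\<^sup>2 \<le> (M *v l)$k * (M *v square_over x l)$k"
  using weighted_sum_square_le[of UNIV "\<lambda>i. M$k$i" "\<lambda>i. l$i" "\<lambda>i. x$i"] assms
  by (simp add: nonneg_mat_def pos_vec_def matrix_vector_mult_def square_over_def)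

lemma mv_add_square_le:
  assumes "nonneg_mat C" and "nonneg_mat F" and "pos_vec l" and "pos_vec n"
  shows "((C *v x + F *v y)$k)\<^sup>2 \<le> (C *v l + F *v n)$k * (C *v square_over x l + F *v square_over y n)$k"
proof -
  have "\<forall>i. 0 \<le> l$i" "\<forall>i. 0 \<le> n$i" "\<forall>i. 0 \<le> square_over x l $ i" "\<forall>i. 0 \<le> square_over y n $ i"
    using assms(3,4) by (auto simp: pos_vec_def less_imp_le square_over_nonneg)
  then show ?thesis
    using nonneg_mat_mv_square_le[OF assms(1,3), of x k] nonneg_mat_mv_square_le[OF assms(2,4), of y k]
    by (simp add: square_add_le_mult_add nonneg_mat_mv_nonneg assms(1,2))
qed

lemma metzler_square_over_nonneg:
  fixes A :: "real^'n^'n" and E :: "real^'q^'n"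
  assumes "metzler A" and "nonneg_mat E" and "pos_vec l" and "pos_vec n"
    and "neg_vec (A *v l + E *v n)"
    and "\<forall>j. 0 \<le> x$j" and "0 \<le> (A *v x + E *v y)$i"
  shows "0 \<le> (A *v square_over x l + E *v square_over y n)$i"
proof -
  define a where "a = - A$i$i"
  define T where "T = (offdiag A *v x + E *v y)$i"
  define R where "R = (offdiag A *v l + E *v n)$i"
  define S where "S = (offdiag A *v square_over x l + E *v square_over y n)$i"
  have split: "(A *v u + E *v z)$i = - a * u$i + (offdiag A *v u + E *v z)$i" for u z
    using matrix_vector_mult_nth_offdiag[of A u i] by (simp add: a_def)
  have l: "0 < l$i" "\<forall>j. 0 \<le> l$j" "\<forall>j. 0 \<le> n$j"
    using assms(3,4) by (auto simp: pos_vec_def less_imp_le)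
  have "0 \<le> R" "0 \<le> S"
    using l assms(3,4) nonneg_mat_offdiag[OF assms(1)] assms(2)
    by (auto simp: R_def S_def square_over_nonneg intro!: add_nonneg_nonneg nonneg_mat_mv_nonneg)
  have "R < a * l$i"
    using assms(5)[unfolded neg_vec_def, THEN spec, of i] split[of l n] unfolding R_def by linarith
  with \<open>0 \<le> R\<close> l(1) have "0 < a"
    by (smt (verit) mult_nonpos_nonneg)
  have "a * x$i \<le> T"
    using assms(7) split[of x y] by (simp add: T_def)
  moreover have "0 \<le> a * x$i"
    using \<open>0 < a\<close> assms(6) by simp
  ultimately have "(a * x$i)\<^sup>2 \<le> T\<^sup>2"
    by (simp add: power_mono)
  also have "\<dots> \<le> R * S"
    unfolding T_def R_def S_def
    by (rule mv_add_square_le[OF nonneg_mat_offdiag[OF assms(1)] assms(2-4)])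
  also have "\<dots> \<le> a * l$i * S"
    using \<open>R < a * l$i\<close> \<open>0 \<le> S\<close> by (simp add: mult_right_mono)
  finally have "a * ((x$i)\<^sup>2 / l$i) \<le> S"
    using \<open>0 < a\<close> l(1) by (simp add: power2_eq_square field_simps)
  then show ?thesis
    using split[of "square_over x l" "square_over y n"] by (simp add: S_def square_over_def)
qed

lemma certificate_form_neg:
  fixes A :: "real^'n^'n" and E :: "real^'q^'n" and C :: "real^'n^'q" and F :: "real^'q^'q"
  assumes r1: "neg_vec (lam v* (transpose C ** D ** C) + nu v* (transpose F ** D ** C) + mu v* A)"
    and r2: "neg_vec (lam v* (transpose C ** D ** F) + nu v* (transpose F ** D ** F - D) + mu v* E)"
    and "\<forall>i. 0 \<le> u$i" and "\<forall>k. 0 \<le> z$k" and "u \<noteq> 0 \<or> z \<noteq> 0"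
  shows "inner (C *v lam + F *v nu) (D *v (C *v u + F *v z)) - inner nu (D *v z)
         + inner mu (A *v u + E *v z) < 0"
proof -
  let ?r1 = "lam v* (transpose C ** D ** C) + nu v* (transpose F ** D ** C) + mu v* A"
  let ?r2 = "lam v* (transpose C ** D ** F) + nu v* (transpose F ** D ** F - D) + mu v* E"
  have "inner ?r1 u + inner ?r2 z < 0"
    using neg_vec_inner_nonpos[OF r1 \<open>\<forall>i. 0 \<le> u$i\<close>] neg_vec_inner_neg[OF r1 \<open>\<forall>i. 0 \<le> u$i\<close>]
      neg_vec_inner_nonpos[OF r2 \<open>\<forall>k. 0 \<le> z$k\<close>] neg_vec_inner_neg[OF r2 \<open>\<forall>k. 0 \<le> z$k\<close>]
      \<open>u \<noteq> 0 \<or> z \<noteq> 0\<close>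
    by linarith
  moreover have "inner ?r1 u + inner ?r2 z = inner (C *v lam + F *v nu) (D *v (C *v u + F *v z))
      - inner nu (D *v z) + inner mu (A *v u + E *v z)"
    by (simp add: dot_lmul_matrix inner_add_left inner_add_right inner_diff_left inner_diff_right
        matrix_vector_mul_assoc[symmetric] inner_transpose_mv matrix_vector_mult_diff_rdistrib
        matrix_vector_right_distrib del: transpose_matrix_vector)
  ultimately show ?thesis by linarith
qed

lemma certificate_excludes_nonneg_solution:
  fixes A :: "real^'n^'n" and E :: "real^'q^'n" and C :: "real^'n^'q" and F :: "real^'q^'q"
    and d :: "'q \<Rightarrow> real"
  defines "D \<equiv> diag_mat d"
  assumes "metzler A" and "nonneg_mat E" and "nonneg_mat C" and "nonneg_mat F"
    and "\<And>k. 0 \<le> d k" and "pos_vec lam" and "pos_vec mu" and "pos_vec nu"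
    and "neg_vec (A *v lam + E *v nu)"
    and r1: "neg_vec (lam v* (transpose C ** D ** C) + nu v* (transpose F ** D ** C) + mu v* A)"
    and r2: "neg_vec (lam v* (transpose C ** D ** F) + nu v* (transpose F ** D ** F - D) + mu v* E)"
    and "\<forall>i. 0 \<le> x$i" and "x \<noteq> 0 \<or> y \<noteq> 0" and "\<forall>i. 0 \<le> (A *v x + E *v y)$i"
    and "(\<Sum>k\<in>UNIV. d k * (y$k)\<^sup>2) \<le> (\<Sum>k\<in>UNIV. d k * ((C *v x + F *v y)$k)\<^sup>2)"
  shows False
proof -
  define u where "u = square_over x lam"
  define z where "z = square_over y nu"
  have "\<forall>i. 0 \<le> u$i" "\<forall>k. 0 \<le> z$k" "u \<noteq> 0 \<or> z \<noteq> 0"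
    using assms(7,9,14) by (simp_all add: u_def z_def square_over_nonneg square_over_eq_0_iff)
  from certificate_form_neg[OF r1 r2 this]
  have form: "inner (C *v lam + F *v nu) (D *v (C *v u + F *v z)) - inner nu (D *v z)
      + inner mu (A *v u + E *v z) < 0" .
  have "nu$k \<noteq> 0" for k
    using assms(9) by (simp add: pos_vec_def less_imp_neq[symmetric])
  then have "inner nu (D *v z) = (\<Sum>k\<in>UNIV. d k * (y$k)\<^sup>2)"
    by (simp add: D_def inner_diag_mat z_def square_over_def)
  moreover have "(\<Sum>k\<in>UNIV. d k * ((C *v x + F *v y)$k)\<^sup>2) \<le> inner (C *v lam + F *v nu) (D *v (C *v u + F *v z))"
    unfolding D_def inner_diag_mat u_def z_def mult.assoc
    by (intro sum_mono mult_left_mono mv_add_square_le assms(3-6,7,9))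
  moreover have "0 \<le> inner mu (A *v u + E *v z)"
    using assms(8) metzler_square_over_nonneg[OF assms(2,3,7,9,10,13)] assms(15)
    by (auto simp: inner_vec_def pos_vec_def u_def z_def less_imp_le intro!: sum_nonneg)
  ultimately show False
    using form assms(16) by linarith
qed

lemma certificate_excludes_loop_solution:
  fixes A :: "real^'n^'n" and E :: "real^'q^'n" and C :: "real^'n^'q" and F :: "real^'q^'q"
    and blk :: "'q \<Rightarrow> 'b" and d :: "'b \<Rightarrow> real"
  defines "D \<equiv> diag_mat (\<lambda>i. d (blk i))"
  assumes "metzler A" and "nonneg_mat E" and "nonneg_mat C" and "nonneg_mat F"
    and "\<And>b. 0 \<le> d b" and "pos_vec lam" and "pos_vec mu" and "pos_vec nu"
    and "neg_vec (A *v lam + E *v nu)"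
    and "neg_vec (lam v* (transpose C ** D ** C) + nu v* (transpose F ** D ** C) + mu v* A)"
    and "neg_vec (lam v* (transpose C ** D ** F) + nu v* (transpose F ** D ** F - D) + mu v* E)"
    and "\<Delta> \<in> Delta2 blk" and loop: "w = \<Delta> *v (cmat C *v v + cmat F *v w)"
    and "\<forall>i. 0 \<le> (A *v cmod_vec v + E *v cmod_vec w)$i"
  shows "v = 0 \<and> w = 0"
proof (rule ccontr)
  assume "\<not> (v = 0 \<and> w = 0)"
  then have "cmod_vec v \<noteq> 0 \<or> cmod_vec w \<noteq> 0" by simp
  moreover have "(\<Sum>k\<in>UNIV. d (blk k) * (cmod_vec w $ k)\<^sup>2)
      \<le> (\<Sum>k\<in>UNIV. d (blk k) * ((C *v cmod_vec v + F *v cmod_vec w)$k)\<^sup>2)"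
  proof -
    have "(\<Sum>k\<in>UNIV. d (blk k) * (cmod_vec w $ k)\<^sup>2)
        \<le> (\<Sum>k\<in>UNIV. d (blk k) * (cmod ((cmat C *v v + cmat F *v w)$k))\<^sup>2)"
      using Delta2_weighted_energy_le[OF assms(13,6), where z="cmat C *v v + cmat F *v w"]
      unfolding loop[symmetric] by (simp add: cmod_vec_def)
    also have "\<dots> \<le> (\<Sum>k\<in>UNIV. d (blk k) * ((C *v cmod_vec v + F *v cmod_vec w)$k)\<^sup>2)"
      using assms(4,5,6) by (intro sum_mono mult_left_mono power_mono cmod_cmat_mv_add_le) auto
    finally show ?thesis .
  qed
  ultimately show False
    using certificate_excludes_nonneg_solution[where d="\<lambda>i. d (blk i)", folded D_def, OF assms(2-12),
        where x="cmod_vec v" and y="cmod_vec w"] assms(15) cmod_vec_nonneg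
    by blast
qed

lemma eigenvector_imp_loop_solution:
  fixes A :: "real^'n^'n" and E :: "real^'q^'n" and C :: "real^'n^'q" and F :: "real^'q^'q"
  assumes "invertible (mat 1 - cmat F ** \<Delta>)"
    and "(cmat A + cmat E ** \<Delta> ** matrix_inv (mat 1 - cmat F ** \<Delta>) ** cmat C) *v v = l *s v"
  shows "\<exists>w. l *s v = cmat A *v v + cmat E *v w \<and> w = \<Delta> *v (cmat C *v v + cmat F *v w)"
proof -
  let ?N = "mat 1 - cmat F ** \<Delta>"
  define z where "z = matrix_inv ?N *v (cmat C *v v)"
  define w where "w = \<Delta> *v z"
  have "?N *v z = cmat C *v v"
    unfolding z_def matrix_vector_mul_assoc[of ?N] matrix_inv_mult(1)[OF assms(1)] by simp
  then have "z - cmat F *v w = cmat C *v v"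
    by (simp add: matrix_vector_mult_diff_rdistrib matrix_vector_mul_assoc w_def)
  then have "w = \<Delta> *v (cmat C *v v + cmat F *v w)"
    by (simp add: w_def algebra_simps)
  moreover have "l *s v = cmat A *v v + cmat E *v w"
    using assms(2)
    by (simp add: matrix_vector_mult_add_rdistrib matrix_vector_mul_assoc[symmetric] w_def z_def)
  ultimately show ?thesis by blast
qed

lemma robustly_stable_if_modulus_solutions_trivial:
  fixes A :: "real^'n^'n" and E :: "real^'q^'n" and C :: "real^'n^'q" and F :: "real^'q^'q"
    and blk :: "'q \<Rightarrow> 'b"
  assumes "metzler A" and "nonneg_mat E"
    and trivial: "\<And>\<Delta> v w. \<Delta> \<in> Delta2 blk \<Longrightarrow> w = \<Delta> *v (cmat C *v v + cmat F *v w) \<Longrightarrow>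
        \<forall>i. 0 \<le> (A *v cmod_vec v + E *v cmod_vec w)$i \<Longrightarrow> v = 0 \<and> w = 0"
  shows "robustly_stable blk A E C F"
  unfolding robustly_stable_def
proof (intro ballI conjI)
  fix \<Delta> assume "\<Delta> \<in> Delta2 blk"
  let ?N = "mat 1 - cmat F ** \<Delta>"
  have "invertible ?N"
  proof (rule invertible_if_ker_trivial)
    fix z assume "?N *v z = 0"
    then have z: "z = cmat F *v (\<Delta> *v z)"
      by (simp add: matrix_vector_mult_diff_rdistrib matrix_vector_mul_assoc)
    have "\<forall>i. 0 \<le> (A *v cmod_vec 0 + E *v cmod_vec (\<Delta> *v z))$i"
      using assms(2) by (simp add: nonneg_mat_mv_nonneg cmod_vec_nonneg)
    with trivial[OF \<open>\<Delta> \<in> Delta2 blk\<close>, of "\<Delta> *v z" 0] z have "\<Delta> *v z = 0"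
      by simp
    with z show "z = 0" by simp
  qed
  then show "invertible ?N" .
  show "hurwitz (cmat A + cmat E ** \<Delta> ** matrix_inv ?N ** cmat C)"
    unfolding hurwitz_def
  proof (intro allI impI, rule ccontr)
    fix l v
    assume eig: "v \<noteq> 0 \<and> (cmat A + cmat E ** \<Delta> ** matrix_inv ?N ** cmat C) *v v = l *s v"
      and "\<not> Re l < 0"
    with eigenvector_imp_loop_solution[OF \<open>invertible ?N\<close>] obtain w
      where "l *s v = cmat A *v v + cmat E *v w" and loop: "w = \<Delta> *v (cmat C *v v + cmat F *v w)"
      by blast
    from metzler_eigen_cmod_nonneg[OF assms(1,2) _ this(1)] \<open>\<not> Re l < 0\<close>
    have "\<forall>i. 0 \<le> (A *v cmod_vec v + E *v cmod_vec w)$i" by simp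
    with trivial[OF \<open>\<Delta> \<in> Delta2 blk\<close> loop] eig show False by simp
  qed
qed

lemma certificate_imp_robustly_stable:
  fixes A :: "real^'n^'n" and E :: "real^'q^'n" and C :: "real^'n^'q" and F :: "real^'q^'q"
    and blk :: "'q \<Rightarrow> 'b"
  assumes "metzler A" and "nonneg_mat E" and "nonneg_mat C" and "nonneg_mat F"
    and "pos_vec lam" and "pos_vec mu" and "pos_vec nu" and "D \<in> D_Delta blk"
    and "neg_vec (A *v lam + E *v nu)"
    and "neg_vec (lam v* (transpose C ** D ** C) + nu v* (transpose F ** D ** C) + mu v* A)"
    and "neg_vec (lam v* (transpose C ** D ** F) + nu v* (transpose F ** D ** F - D) + mu v* E)"
  shows "robustly_stable blk A E C F"
proof (rule robustly_stable_if_modulus_solutions_trivial[OF assms(1,2)])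
  obtain d where "\<And>b. 0 < d b" and "D = diag_mat (\<lambda>i. d (blk i))"
    using assms(8) by (auto simp: D_Delta_iff)
  then show "v = 0 \<and> w = 0"
    if "\<Delta> \<in> Delta2 blk" "w = \<Delta> *v (cmat C *v v + cmat F *v w)"
       "\<forall>i. 0 \<le> (A *v cmod_vec v + E *v cmod_vec w)$i" for \<Delta> v w
    using certificate_excludes_loop_solution[of A E C F d, OF assms(1-4) _ assms(5-7,9) _ _ that]
      assms(10,11) by (simp add: less_imp_le)
qed

section \<open>Necessity of the certificate\<close>

lemma robustly_stable_loop_trivial:
  fixes A :: "real^'n^'n" and E :: "real^'q^'n" and C :: "real^'n^'q" and F :: "real^'q^'q"
    and blk :: "'q \<Rightarrow> 'b"
  assumes "robustly_stable blk A E C F" and "\<Delta> \<in> Delta2 blk" and "0 \<le> Re l"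
    and eig: "l *s v = cmat A *v v + cmat E *v w"
    and loop: "w = \<Delta> *v (cmat C *v v + cmat F *v w)"
  shows "v = 0 \<and> w = 0"
proof -
  let ?N = "mat 1 - cmat F ** \<Delta>"
  have inv: "invertible ?N" and hw: "hurwitz (cmat A + cmat E ** \<Delta> ** matrix_inv ?N ** cmat C)"
    using assms(1,2) by (auto simp: robustly_stable_def)
  define z where "z = cmat C *v v + cmat F *v w"
  have "\<Delta> *v z = w"
    using loop by (simp add: z_def)
  then have Nz: "?N *v z = cmat C *v v"
    by (simp add: z_def matrix_vector_mult_diff_rdistrib matrix_vector_mul_assoc[symmetric])
  then have z: "z = matrix_inv ?N *v (cmat C *v v)"
    by (metis matrix_inv_mult(2)[OF inv] matrix_vector_mul_assoc matrix_vector_mul_lid)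
  have "(cmat A + cmat E ** \<Delta> ** matrix_inv ?N ** cmat C) *v v = l *s v"
    using eig loop
    by (simp add: matrix_vector_mult_add_rdistrib matrix_vector_mul_assoc[symmetric]
        z_def[symmetric] z[symmetric])
  with hw \<open>0 \<le> Re l\<close> have "v = 0"
    by (force simp: hurwitz_def)
  with Nz have "?N *v z = 0" by simp
  then have "z = 0"
    using inj_matrix_vector_mult[OF inv] by (metis matrix_vector_mult_0_right injD)
  with \<open>v = 0\<close> loop show ?thesis
    by (simp add: z_def)
qed

lemma robustly_stable_no_nonneg_eigenvalue:
  fixes A :: "real^'n^'n"
  assumes "robustly_stable blk A E C F" and "x \<noteq> 0" and "0 \<le> r"
  shows "A *v x \<noteq> r *\<^sub>R x"
proof
  assume "A *v x = r *\<^sub>R x"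
  then have "complex_of_real r *s cvec x = cmat A *v cvec x + cmat E *v 0"
    by (simp add: cmat_mv_cvec vec_eq_iff)
  moreover have "0 \<in> Delta2 blk"
    by (simp add: Delta2_def)
  ultimately have "cvec x = 0"
    using robustly_stable_loop_trivial[OF assms(1), of 0 "complex_of_real r" "cvec x" 0] assms(3)
    by simp
  with \<open>x \<noteq> 0\<close> show False by simp
qed

lemma robustly_stable_no_block_gain:
  fixes A :: "real^'n^'n" and E :: "real^'q^'n" and C :: "real^'n^'q" and F :: "real^'q^'q"
    and blk :: "'q \<Rightarrow> 'b" and X :: "real^'q^'n"
  assumes "robustly_stable blk A E C F" and AX: "A ** X = - E" and "y \<noteq> 0"
  shows "\<exists>k. block_sum blk (\<lambda>j. (((F + C ** X) *v y)$j)\<^sup>2) (blk k) < block_sum blk (\<lambda>j. (y$j)\<^sup>2) (blk k)"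
proof (rule ccontr)
  define g where "g = (F + C ** X) *v y"
  assume "\<not> ?thesis"
  then have "block_sum blk (\<lambda>j. (y$j)\<^sup>2) b \<le> block_sum blk (\<lambda>j. (g$j)\<^sup>2) b" for b
    by (cases "b \<in> range blk") (auto simp: g_def not_less block_sum_outside_range)
  note le = this
  define R where "R = block_rank_one blk y g"
  have "(0::complex) *s cvec (X *v y) = cmat A *v cvec (X *v y) + cmat E *v cvec y"
    by (simp add: cmat_mv_cvec cvec_add matrix_vector_mul_assoc AX matrix_vector_mult_uminus_left
        flip: matrix_vector_mult_add_rdistrib)
  moreover have "cvec y = cmat R *v (cmat C *v cvec (X *v y) + cmat F *v cvec y)"
    using block_rank_one_mult_vector[OF le]
    by (simp add: R_def g_def cmat_mv_cvec cvec_add matrix_vector_mul_assoc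
        matrix_vector_mult_add_rdistrib add.commute)
  ultimately have "cvec y = 0"
    using robustly_stable_loop_trivial[OF assms(1) block_rank_one_in_Delta2[OF le],
        of 0 "cvec (X *v y)" "cvec y"]
    by (simp add: R_def)
  with \<open>y \<noteq> 0\<close> show False by simp
qed

definition energy_gain :: "real^'q^'q \<Rightarrow> real^'q \<Rightarrow> 'q \<Rightarrow> real" where
  "energy_gain G t j = (\<Sum>l\<in>UNIV. G$j$l * sqrt (t$l))\<^sup>2 - t$j"

definition block_gain :: "real^'q^'q \<Rightarrow> ('q \<Rightarrow> 'b) \<Rightarrow> real^'q \<Rightarrow> real^'q" where
  "block_gain G blk t = (\<chi> k. block_sum blk (energy_gain G t) (blk k))"

lemma continuous_on_energy_gain: "continuous_on S (\<lambda>t. energy_gain G t j)"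
  unfolding energy_gain_def by (intro continuous_intros)

lemma energy_gain_sqrt:
  assumes "\<forall>l. 0 \<le> t$l"
  shows "energy_gain G t j = ((G *v (\<chi> l. sqrt (t$l)))$j)\<^sup>2 - ((\<chi> l. sqrt (t$l))$j)\<^sup>2"
  using assms by (simp add: energy_gain_def matrix_vector_mult_def)

lemma energy_gain_concave:
  assumes "nonneg_mat G" and "\<forall>l. 0 \<le> s$l" and "\<forall>l. 0 \<le> t$l" and "0 \<le> u" and "u \<le> 1"
  shows "(1 - u) * energy_gain G s j + u * energy_gain G t j \<le> energy_gain G ((1 - u) *\<^sub>R s + u *\<^sub>R t) j"
  using sum_sqrt_concave[where I=UNIV and g="\<lambda>l. G$j$l" and a="\<lambda>l. s$l" and b="\<lambda>l. t$l"] assms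
  by (simp add: energy_gain_def nonneg_mat_def algebra_simps)

lemma inner_block_sum_vector:
  "inner a (\<chi> k. block_sum blk f (blk k)) = (\<Sum>j\<in>UNIV. block_sum blk (\<lambda>k. a$k) (blk j) * f j)"
proof -
  have "inner a (\<chi> k. block_sum blk f (blk k))
      = (\<Sum>k\<in>UNIV. \<Sum>j\<in>UNIV. if blk k = blk j then a$k * f j else 0)"
    unfolding inner_vec_def block_sum_def by (auto simp: sum_distrib_left intro!: sum.cong)
  also have "\<dots> = (\<Sum>j\<in>UNIV. block_sum blk (\<lambda>k. a$k) (blk j) * f j)"
    unfolding block_sum_def sum_distrib_right by (subst sum.swap) (auto intro!: sum.cong)
  finally show ?thesis .
qed

lemma block_gain_hull_has_neg_component:
  fixes G :: "real^'q^'q" and blk :: "'q \<Rightarrow> 'b"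
  assumes "nonneg_mat G"
    and gain: "\<And>t. t \<in> unit_simplex \<Longrightarrow> \<exists>k. block_gain G blk t $ k < 0"
  shows "\<forall>y\<in>convex hull (block_gain G blk ` unit_simplex). \<exists>k. y$k < 0"
proof -
  \<comment> \<open>the hypograph of the concave map block_gain over the simplex is convex\<close>
  define S where "S = {y. \<exists>t\<in>unit_simplex. \<forall>k. y$k \<le> block_gain G blk t $ k}"
  have "convex S"
    unfolding convex_alt
  proof (intro ballI allI impI, elim conjE)
    fix y1 y2 and u :: real assume "y1 \<in> S" "y2 \<in> S" and u: "0 \<le> u" "u \<le> 1"
    then obtain t1 t2 where t: "t1 \<in> unit_simplex" "t2 \<in> unit_simplex"
      and y: "\<forall>k. y1$k \<le> block_gain G blk t1 $ k" "\<forall>k. y2$k \<le> block_gain G blk t2 $ k"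
      by (auto simp: S_def)
    have "((1 - u) *\<^sub>R y1 + u *\<^sub>R y2)$k \<le> block_gain G blk ((1 - u) *\<^sub>R t1 + u *\<^sub>R t2) $ k" for k
    proof -
      have "((1 - u) *\<^sub>R y1 + u *\<^sub>R y2)$k \<le> (1 - u) * block_gain G blk t1 $ k + u * block_gain G blk t2 $ k"
        using y u by (simp add: add_mono mult_left_mono)
      also have "\<dots> = block_sum blk (\<lambda>j. (1 - u) * energy_gain G t1 j + u * energy_gain G t2 j) (blk k)"
        by (simp add: block_gain_def block_sum_def sum_distrib_left sum.distrib[symmetric] if_distrib
            cong: if_cong)
      also have "\<dots> \<le> block_gain G blk ((1 - u) *\<^sub>R t1 + u *\<^sub>R t2) $ k"
        unfolding block_gain_def block_sum_def using t u assms(1)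
        by (auto intro!: sum_mono energy_gain_concave simp: unit_simplex_def)
      finally show ?thesis .
    qed
    moreover have "(1 - u) *\<^sub>R t1 + u *\<^sub>R t2 \<in> unit_simplex"
      using convex_unit_simplex t u unfolding convex_alt by blast
    ultimately show "(1 - u) *\<^sub>R y1 + u *\<^sub>R y2 \<in> S"
      by (auto simp: S_def)
  qed
  then have hull: "convex hull (block_gain G blk ` unit_simplex) \<subseteq> S"
    by (intro hull_minimal) (auto simp: S_def)
  show ?thesis
  proof
    fix y assume "y \<in> convex hull (block_gain G blk ` unit_simplex)"
    with hull obtain t where "t \<in> unit_simplex" "\<forall>k. y$k \<le> block_gain G blk t $ k"
      by (auto simp: S_def)
    with gain show "\<exists>k. y$k < 0"
      by (meson le_less_trans)
  qed
qed

lemma energy_gain_bounded_on_simplex: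
  "\<exists>M. \<forall>t\<in>unit_simplex. (\<Sum>j\<in>UNIV. energy_gain G t j) \<le> M"
proof -
  have "compact ((\<lambda>t. \<Sum>j\<in>UNIV. energy_gain G t j) ` unit_simplex)"
    by (intro compact_continuous_image compact_unit_simplex continuous_intros continuous_on_energy_gain)
  moreover have "(\<lambda>t. \<Sum>j\<in>UNIV. energy_gain G t j) ` unit_simplex \<noteq> {}"
    using unit_simplex_nonempty by simp
  ultimately obtain M where "\<forall>x\<in>(\<lambda>t. \<Sum>j\<in>UNIV. energy_gain G t j) ` unit_simplex. x \<le> M"
    using compact_attains_sup by blast
  then show ?thesis by blast
qed

lemma exists_block_scaling_on_simplex:
  fixes G :: "real^'q^'q" and blk :: "'q \<Rightarrow> 'b"
  assumes "nonneg_mat G"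
    and "\<And>t. t \<in> unit_simplex \<Longrightarrow> \<exists>k. block_gain G blk t $ k < 0"
  shows "\<exists>d. (\<forall>b. 0 < d b) \<and> (\<forall>t\<in>unit_simplex. (\<Sum>j\<in>UNIV. d (blk j) * energy_gain G t j) < 0)"
proof -
  define K where "K = convex hull (block_gain G blk ` unit_simplex)"
  have "continuous_on unit_simplex (block_gain G blk)"
    unfolding block_gain_def block_sum_eq_sum
    by (intro continuous_on_vec_lambda continuous_intros continuous_on_energy_gain)
  then have "compact K"
    unfolding K_def by (intro compact_convex_hull compact_continuous_image compact_unit_simplex)
  then obtain a b where a: "\<forall>k. 0 \<le> a$k" and "b < 0" and aK: "\<forall>x\<in>K. inner a x < b"
    using separate_from_nonneg_orthant[of K] block_gain_hull_has_neg_component[OF assms]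
    by (auto simp: K_def)
  obtain M where M: "\<forall>t\<in>unit_simplex. (\<Sum>j\<in>UNIV. energy_gain G t j) \<le> M"
    using energy_gain_bounded_on_simplex by blast
  define c where "c = block_sum blk (\<lambda>k. a$k)"
  \<comment> \<open>c may vanish on some blocks; a small uniform shift e keeps the sign\<close>
  define e where "e = - b / (2 * (\<bar>M\<bar> + 1))"
  have "0 < e"
    unfolding e_def using \<open>b < 0\<close> by (intro divide_pos_pos) auto
  have "e * \<bar>M\<bar> \<le> - b / 2"
    using \<open>b < 0\<close> by (simp add: e_def field_simps)
  define d where "d bb = c bb + e" for bb
  have "0 < d bb" for bb
    using \<open>0 < e\<close> a by (simp add: d_def c_def block_sum_nonneg add_nonneg_pos)
  moreover have "(\<Sum>j\<in>UNIV. d (blk j) * energy_gain G t j) < 0" if "t \<in> unit_simplex" for t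
  proof -
    have "(\<Sum>j\<in>UNIV. c (blk j) * energy_gain G t j) = inner a (block_gain G blk t)"
      by (simp add: block_gain_def inner_block_sum_vector c_def)
    also have "\<dots> < b"
      using aK that by (auto simp: K_def intro: hull_inc)
    finally have "(\<Sum>j\<in>UNIV. c (blk j) * energy_gain G t j) < b" .
    moreover have "e * (\<Sum>j\<in>UNIV. energy_gain G t j) \<le> e * \<bar>M\<bar>"
      using M that \<open>0 < e\<close> by (intro mult_left_mono) fastforce+
    ultimately show ?thesis
      using \<open>e * \<bar>M\<bar> \<le> - b / 2\<close> \<open>b < 0\<close>
      by (simp add: d_def distrib_right sum.distrib sum_distrib_left[symmetric])
  qed
  ultimately show ?thesis by blast
qed

lemma exists_block_scaling:
  fixes G :: "real^'q^'q" and blk :: "'q \<Rightarrow> 'b"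
  assumes "nonneg_mat G"
    and "\<And>t. t \<in> unit_simplex \<Longrightarrow> \<exists>k. block_gain G blk t $ k < 0"
  shows "\<exists>d. (\<forall>b. 0 < d b) \<and> (\<forall>y. (\<forall>k. 0 \<le> y$k) \<longrightarrow> y \<noteq> 0 \<longrightarrow>
           (\<Sum>k\<in>UNIV. d (blk k) * ((G *v y)$k)\<^sup>2) < (\<Sum>k\<in>UNIV. d (blk k) * (y$k)\<^sup>2))"
proof -
  obtain d where "\<forall>b. 0 < d b"
    and neg: "\<forall>t\<in>unit_simplex. (\<Sum>j\<in>UNIV. d (blk j) * energy_gain G t j) < 0"
    using exists_block_scaling_on_simplex[OF assms] by blast
  moreover have "(\<Sum>k\<in>UNIV. d (blk k) * ((G *v y)$k)\<^sup>2) < (\<Sum>k\<in>UNIV. d (blk k) * (y$k)\<^sup>2)"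
    if y: "\<forall>k. 0 \<le> y$k" "y \<noteq> 0" for y
  proof -
    define s where "s = (\<Sum>k\<in>UNIV. (y$k)\<^sup>2)"
    define t where "t = inverse s *\<^sub>R (\<chi> k. (y$k)\<^sup>2)"
    obtain k where "y$k \<noteq> 0" using y(2) by (auto simp: vec_eq_iff)
    then have "0 < s"
      unfolding s_def by (intro sum_pos2[of UNIV k]) auto
    have "(\<chi> k. (y$k)\<^sup>2) \<noteq> 0" using \<open>y$k \<noteq> 0\<close> by (auto simp: vec_eq_iff)
    then have "t \<in> unit_simplex"
      using scaleR_inverse_sum_unit_simplex[of "\<chi> k. (y$k)\<^sup>2"] by (simp add: t_def s_def)
    have "sqrt (t$l) = y$l / sqrt s" for l
      using y(1) \<open>0 < s\<close> by (simp add: t_def real_sqrt_divide field_simps)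
    then have "energy_gain G t j = (((G *v y)$j)\<^sup>2 - (y$j)\<^sup>2) / s" for j
      using \<open>0 < s\<close>
      by (simp add: energy_gain_def matrix_vector_mult_def sum_divide_distrib[symmetric]
          power_divide diff_divide_distrib t_def inverse_eq_divide)
    then have "s * energy_gain G t j = ((G *v y)$j)\<^sup>2 - (y$j)\<^sup>2" for j
      using \<open>0 < s\<close> by simp
    then have "s * (d (blk j) * energy_gain G t j) = d (blk j) * ((G *v y)$j)\<^sup>2 - d (blk j) * (y$j)\<^sup>2" for j
      by (metis mult.left_commute right_diff_distrib)
    then have "s * (\<Sum>j\<in>UNIV. d (blk j) * energy_gain G t j)
        = (\<Sum>k\<in>UNIV. d (blk k) * ((G *v y)$k)\<^sup>2) - (\<Sum>k\<in>UNIV. d (blk k) * (y$k)\<^sup>2)"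
      by (simp add: sum_distrib_left sum_subtractf)
    moreover have "s * (\<Sum>j\<in>UNIV. d (blk j) * energy_gain G t j) < 0"
      using neg \<open>t \<in> unit_simplex\<close> \<open>0 < s\<close> by (simp add: mult_pos_neg)
    ultimately show ?thesis by simp
  qed
  ultimately show ?thesis by blast
qed

lemma robustly_stable_block_gain_neg:
  fixes A :: "real^'n^'n" and E :: "real^'q^'n" and C :: "real^'n^'q" and F :: "real^'q^'q"
    and blk :: "'q \<Rightarrow> 'b" and X :: "real^'q^'n"
  assumes "robustly_stable blk A E C F" and "A ** X = - E" and "t \<in> unit_simplex"
  shows "\<exists>k. block_gain (F + C ** X) blk t $ k < 0"
proof -
  define y where "y = (\<chi> l. sqrt (t$l))"
  have "t \<noteq> 0"
    using assms(3) by (auto simp: unit_simplex_def)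
  then have "y \<noteq> 0"
    by (auto simp: y_def vec_eq_iff)
  have "\<forall>l. 0 \<le> t$l" using assms(3) by (simp add: unit_simplex_def)
  then have "energy_gain (F + C ** X) t = (\<lambda>j. (((F + C ** X) *v y)$j)\<^sup>2 - (y$j)\<^sup>2)"
    by (simp add: fun_eq_iff energy_gain_sqrt y_def)
  then have "block_gain (F + C ** X) blk t $ k = block_sum blk (\<lambda>j. (((F + C ** X) *v y)$j)\<^sup>2) (blk k)
      - block_sum blk (\<lambda>j. (y$j)\<^sup>2) (blk k)" for k
    by (simp add: block_gain_def block_sum_diff)
  then show ?thesis
    using robustly_stable_no_block_gain[OF assms(1,2) \<open>y \<noteq> 0\<close>] by auto
qed

lemma exists_pos_vec_contraction:
  fixes G :: "real^'q^'q" and d :: "'q \<Rightarrow> real"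
  defines "D \<equiv> diag_mat d"
  assumes "\<And>y. \<forall>k. 0 \<le> y$k \<Longrightarrow> y \<noteq> 0 \<Longrightarrow>
      (\<Sum>k\<in>UNIV. d k * ((G *v y)$k)\<^sup>2) < (\<Sum>k\<in>UNIV. d k * (y$k)\<^sup>2)"
  shows "\<exists>nu. pos_vec nu \<and> neg_vec ((transpose G ** D ** G - D) *v nu)"
proof (rule ccontr)
  assume "\<not> ?thesis"
  from gordan_alternative[OF this] obtain y where "\<forall>i. 0 \<le> y$i" "y \<noteq> 0"
    and "\<forall>j. 0 \<le> (y v* (transpose G ** D ** G - D))$j" by blast
  then have "0 \<le> inner (y v* (transpose G ** D ** G - D)) y"
    by (auto simp: inner_vec_def intro!: sum_nonneg)
  also have "\<dots> = inner (G *v y) (D *v (G *v y)) - inner y (D *v y)"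
    by (simp add: dot_lmul_matrix matrix_vector_mult_diff_rdistrib inner_diff_right
        matrix_vector_mul_assoc[symmetric] inner_transpose_mv del: transpose_matrix_vector)
  also have "\<dots> = (\<Sum>k\<in>UNIV. d k * ((G *v y)$k)\<^sup>2) - (\<Sum>k\<in>UNIV. d k * (y$k)\<^sup>2)"
    by (simp add: D_def inner_diag_mat power2_eq_square mult.assoc)
  finally show False
    using assms(2)[OF \<open>\<forall>i. 0 \<le> y$i\<close> \<open>y \<noteq> 0\<close>] by simp
qed

lemma pos_vec_neg_inverse_ones:
  fixes A P :: "real^'n^'n"
  assumes "metzler A" and "nonneg_mat P" and "A ** P = - mat 1"
  shows "pos_vec (P *v 1)"
proof (rule metzler_pos_vec_if_neg_vec[OF assms(1)])
  show "\<forall>i. 0 \<le> (P *v 1)$i"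
    using nonneg_mat_mv_nonneg[OF assms(2)] by simp
  show "neg_vec (A *v (P *v 1))"
    using assms(3) by (simp add: matrix_vector_mul_assoc matrix_vector_mult_uminus_left neg_vec_def)
qed

lemma certificate_identities_state:
  fixes A :: "real^'n^'n" and E :: "real^'q^'n" and C :: "real^'n^'q" and F :: "real^'q^'q"
    and P :: "real^'n^'n" and D :: "real^'q^'q"
  assumes AP: "A ** P = - mat 1" and PA: "P ** A = - mat 1" and D: "transpose D = D"
    and lam: "lam = P ** E *v nu + e *\<^sub>R (P *v 1)"
    and w: "w = transpose C *v (D *v (C *v lam + F *v nu))"
    and mu: "mu = transpose P *v w + e *\<^sub>R (transpose P *v 1)"
  shows "A *v lam + E *v nu = - (e *\<^sub>R 1)"
    and "lam v* (transpose C ** D ** C) + nu v* (transpose F ** D ** C) + mu v* A = - (e *\<^sub>R 1)"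
proof -
  show "A *v lam + E *v nu = - (e *\<^sub>R 1)"
    by (simp add: lam matrix_vector_right_distrib matrix_vector_mult_scaleR matrix_vector_mul_assoc
        matrix_mul_assoc AP matrix_mul_uminus_left matrix_vector_mult_uminus_left)
  have "transpose A ** transpose P = - mat 1"
    by (simp add: matrix_transpose_mul[symmetric] PA transpose_uminus)
  then have "transpose A *v mu = - w - e *\<^sub>R 1"
    by (simp add: mu matrix_vector_right_distrib matrix_vector_mult_scaleR
        matrix_vector_mul_assoc matrix_vector_mult_uminus_left del: transpose_matrix_vector)
  moreover have "lam v* (transpose C ** D ** C) + nu v* (transpose F ** D ** C) = w"
    by (simp add: vector_matrix_mult_sandwich[OF D] w matrix_vector_right_distrib
        del: transpose_matrix_vector)
  ultimately show "lam v* (transpose C ** D ** C) + nu v* (transpose F ** D ** C) + mu v* A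
      = - (e *\<^sub>R 1)"
    by simp
qed

lemma certificate_identity_input:
  fixes A :: "real^'n^'n" and E :: "real^'q^'n" and C :: "real^'n^'q" and F :: "real^'q^'q"
    and P :: "real^'n^'n" and D :: "real^'q^'q"
  defines "G \<equiv> F + C ** (P ** E)"
  assumes D: "transpose D = D"
    and lam: "lam = P ** E *v nu + e *\<^sub>R (P *v 1)"
    and w: "w = transpose C *v (D *v (C *v lam + F *v nu))"
    and mu: "mu = transpose P *v w + e *\<^sub>R (transpose P *v 1)"
  shows "lam v* (transpose C ** D ** F) + nu v* (transpose F ** D ** F - D) + mu v* E
      = (transpose G ** D ** G - D) *v nu
        + e *\<^sub>R (transpose G *v (D *v (C *v (P *v 1))) + transpose E *v (transpose P *v 1))"
proof -
  define y where "y = C *v lam + F *v nu"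
  have "nu v* D = D *v nu" by (metis D transpose_matrix_vector)
  moreover have "mu v* E = transpose (P ** E) *v w + e *\<^sub>R (transpose E *v (transpose P *v 1))"
    by (simp add: mu matrix_vector_right_distrib matrix_vector_mult_scaleR
        matrix_vector_mul_assoc matrix_transpose_mul flip: transpose_matrix_vector)
  ultimately have "lam v* (transpose C ** D ** F) + nu v* (transpose F ** D ** F - D) + mu v* E
      = transpose F *v (D *v y) + transpose (P ** E) *v w - D *v nu
        + e *\<^sub>R (transpose E *v (transpose P *v 1))"
    by (simp add: vector_matrix_mult_diff_rdistrib vector_matrix_mult_sandwich[OF D] y_def
        matrix_vector_right_distrib algebra_simps del: transpose_matrix_vector)
  also have "transpose (P ** E) *v w = transpose (C ** (P ** E)) *v (D *v y)"
    by (simp add: w y_def matrix_vector_mul_assoc matrix_transpose_mul matrix_mul_assoc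
        del: transpose_matrix_vector)
  also have "transpose F *v (D *v y) + transpose (C ** (P ** E)) *v (D *v y) = transpose G *v (D *v y)"
  proof -
    have "transpose G = transpose F + transpose (C ** (P ** E))"
      by (simp add: G_def transpose_def vec_eq_iff)
    then show ?thesis
      by (simp add: matrix_vector_mult_add_rdistrib del: transpose_matrix_vector)
  qed
  also have "y = G *v nu + e *\<^sub>R (C *v (P *v 1))"
    by (simp add: y_def lam G_def matrix_vector_right_distrib matrix_vector_mult_scaleR
        matrix_vector_mult_add_rdistrib matrix_vector_mul_assoc algebra_simps)
  finally show ?thesis
    by (simp add: matrix_vector_mult_diff_rdistrib matrix_vector_right_distrib
        matrix_vector_mult_scaleR matrix_vector_mul_assoc[symmetric] algebra_simps
        del: transpose_matrix_vector)
qed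

lemma certificate_from_scaling:
  fixes A :: "real^'n^'n" and E :: "real^'q^'n" and C :: "real^'n^'q" and F :: "real^'q^'q"
    and P :: "real^'n^'n" and D :: "real^'q^'q"
  defines "G \<equiv> F + C ** (P ** E)"
  assumes "metzler A" and "nonneg_mat E" and "nonneg_mat C" and "nonneg_mat F"
    and "nonneg_mat P" and AP: "A ** P = - mat 1" and PA: "P ** A = - mat 1"
    and "nonneg_mat D" and D: "transpose D = D"
    and "pos_vec nu" and "neg_vec ((transpose G ** D ** G - D) *v nu)"
  shows "\<exists>lam mu. pos_vec lam \<and> pos_vec mu \<and> neg_vec (A *v lam + E *v nu) \<and>
     neg_vec (lam v* (transpose C ** D ** C) + nu v* (transpose F ** D ** C) + mu v* A) \<and>
     neg_vec (lam v* (transpose C ** D ** F) + nu v* (transpose F ** D ** F - D) + mu v* E)"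
proof -
  have ATPT: "transpose A ** transpose P = - mat 1"
    by (simp add: matrix_transpose_mul[symmetric] PA transpose_uminus)
  have "pos_vec (P *v 1)" "pos_vec (transpose P *v 1)"
    using pos_vec_neg_inverse_ones[OF assms(2,6) AP]
      pos_vec_neg_inverse_ones[OF metzler_transpose[OF assms(2)] nonneg_mat_transpose[OF assms(6)] ATPT]
    by simp_all
  obtain e where "0 < e" and r2: "neg_vec ((transpose G ** D ** G - D) *v nu
      + e *\<^sub>R (transpose G *v (D *v (C *v (P *v 1))) + transpose E *v (transpose P *v 1)))"
    using neg_vec_perturb[OF assms(12)] by blast
  define lam where "lam = P ** E *v nu + e *\<^sub>R (P *v 1)"
  define w where "w = transpose C *v (D *v (C *v lam + F *v nu))"
  define mu where "mu = transpose P *v w + e *\<^sub>R (transpose P *v 1)"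
  note eqs = certificate_identities_state[OF AP PA D lam_def w_def mu_def]
    certificate_identity_input[OF D lam_def w_def mu_def]
  have nonneg: "\<forall>i. 0 \<le> (M *v x)$i" if "nonneg_mat M" "\<forall>i. 0 \<le> x$i" for M :: "real^'m^'k" and x
    using nonneg_mat_mv_nonneg[OF that] by blast
  have "\<forall>i. 0 \<le> nu$i"
    using assms(11) by (simp add: pos_vec_def less_imp_le)
  then have "pos_vec lam"
    using \<open>pos_vec (P *v 1)\<close> \<open>0 < e\<close> nonneg[OF nonneg_mat_mult[OF assms(6,3)], of nu]
    by (auto simp: pos_vec_def lam_def add_nonneg_pos)
  then have "\<forall>i. 0 \<le> w$i" unfolding w_def
    using assms(4,5,9) \<open>\<forall>i. 0 \<le> nu$i\<close>
    by (intro nonneg nonneg_mat_transpose)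
       (auto simp: pos_vec_def less_imp_le intro!: add_nonneg_nonneg dest!: nonneg)
  then have "pos_vec mu"
    using \<open>pos_vec (transpose P *v 1)\<close> \<open>0 < e\<close> nonneg[OF nonneg_mat_transpose[OF assms(6)]]
    by (auto simp: pos_vec_def mu_def add_nonneg_pos simp del: transpose_matrix_vector)
  moreover have "neg_vec (- (e *\<^sub>R 1 :: real^'n))"
    using \<open>0 < e\<close> by (simp add: neg_vec_def)
  ultimately show ?thesis
    using \<open>pos_vec lam\<close> eqs r2 unfolding G_def by metis
qed

lemma robustly_stable_imp_certificate:
  fixes A :: "real^'n^'n" and E :: "real^'q^'n" and C :: "real^'n^'q" and F :: "real^'q^'q"
    and blk :: "'q \<Rightarrow> 'b"
  assumes "robustly_stable blk A E C F"
    and "metzler A" and "nonneg_mat E" and "nonneg_mat C" and "nonneg_mat F"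
  shows "\<exists>(lam::real^'n) (mu::real^'n) (nu::real^'q) D.
     pos_vec lam \<and> pos_vec mu \<and> pos_vec nu \<and> D \<in> D_Delta blk \<and>
     neg_vec (A *v lam + E *v nu) \<and>
     neg_vec (lam v* (transpose C ** D ** C) + nu v* (transpose F ** D ** C) + mu v* A) \<and>
     neg_vec (lam v* (transpose C ** D ** F) + nu v* (transpose F ** D ** F - D) + mu v* E)"
proof -
  obtain P where P: "nonneg_mat P" "A ** P = - mat 1" "P ** A = - mat 1"
    using metzler_neg_inverse_nonneg_if_no_nonneg_eigenvalue[OF assms(2)]
      robustly_stable_no_nonneg_eigenvalue[OF assms(1)] by blast
  define G where "G = F + C ** (P ** E)"
  have "nonneg_mat G"
    unfolding G_def using assms(3-5) P(1) by (intro nonneg_mat_add nonneg_mat_mult)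
  have "A ** (P ** E) = - E"
    by (simp add: matrix_mul_assoc P(2) matrix_mul_uminus_left)
  from exists_block_scaling[OF \<open>nonneg_mat G\<close> robustly_stable_block_gain_neg[OF assms(1) this, folded G_def]]
  obtain d where "\<forall>b. 0 < d b" and contraction: "\<forall>y. (\<forall>k. 0 \<le> y$k) \<longrightarrow> y \<noteq> 0 \<longrightarrow>
      (\<Sum>k\<in>UNIV. d (blk k) * ((G *v y)$k)\<^sup>2) < (\<Sum>k\<in>UNIV. d (blk k) * (y$k)\<^sup>2)"
    by blast
  define D where "D = diag_mat (\<lambda>i. d (blk i))"
  have "D \<in> D_Delta blk" "nonneg_mat D"
    using \<open>\<forall>b. 0 < d b\<close> by (auto simp: D_def D_Delta_iff nonneg_mat_def diag_mat_def less_imp_le)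
  moreover have "transpose D = D"
    by (simp add: D_def)
  moreover obtain nu where "pos_vec nu" "neg_vec ((transpose G ** D ** G - D) *v nu)"
    using exists_pos_vec_contraction[where G=G and d="\<lambda>i. d (blk i)"] contraction unfolding D_def by blast
  ultimately show ?thesis
    using certificate_from_scaling[OF assms(2-5) P, of D nu] unfolding G_def by blast
qed

theorem theorem3:
  fixes A :: "real^'n^'n" and E :: "real^'q^'n" and C :: "real^'n^'q"
    and F :: "real^'q^'q" and blk :: "'q \<Rightarrow> 'b"
  assumes "metzler A" and "nonneg_mat E" and "nonneg_mat C" and "nonneg_mat F"
  shows "robustly_stable blk A E C F \<longleftrightarrow>
    (\<exists>(lam::real^'n) (mu::real^'n) (nu::real^'q) D.
       pos_vec lam \<and> pos_vec mu \<and> pos_vec nu \<and> D \<in> D_Delta blk \<and>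
       neg_vec (A *v lam + E *v nu) \<and>
       neg_vec (lam v* (transpose C ** D ** C) + nu v* (transpose F ** D ** C) + mu v* A) \<and>
       neg_vec (lam v* (transpose C ** D ** F) + nu v* (transpose F ** D ** F - D) + mu v* E))"
  using robustly_stable_imp_certificate[OF _ assms] certificate_imp_robustly_stable[OF assms]
  by blast

end
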